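(* Let $L\in\mathcal K(\partial)$ be a rational operator with minimal right fractional decomposition $L=AB^{-1}$. Then the following are equivalent: (1) $L$ is weakly non-local with coefficients in $\mathcal K$, i.e. $L=E+\sum_{i}p_i\partial^{-1}q_i$ for some $E\in\mathcal K[\partial]$ and $p_i,q_i\in\mathcal K$; (2) $B$ has a full kernel in $\mathcal K$; (3) $B^*$ has a full kernel in $\mathcal K$. Moreover, if $L=E+\sum_{i=1}^np_i\partial^{-1}q_i$ with $E\in\mathcal K[\partial]$ and with $\{p_1,\dots,p_n\}$ and $\{q_1,\dots,q_n\}$ each linearly independent elements of $\mathcal K$, then $d(B)=n$, $B$ is a right least common multiple of the differential operators $\frac{1}{q_i}\partial$ ($i=1,\dots,n$), and $\operatorname{Ker}B^*$ is spanned over $\mathcal C$ by $q_1,\dots,q_n$.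
   Context: $\mathcal V$ is an algebra of differential functions in one variable $u$ (commutative $\mathbb C$-algebra containing $R=\mathbb C[u,u',\dots]$ with commuting derivations $\partial/\partial u^{(n)}$ extending those of $R$ and $\partial/\partial x$ commuting with them and vanishing on $R$, each element having finitely many nonzero partial derivatives); total derivative $\partial=\sum_nu^{(n+1)}\frac{\partial}{\partial u^{(n)}}+\frac{\partial}{\partial x}$. Standing assumptions: $\mathcal V$ is a normal domain with fraction field $\mathcal K$; $\mathcal C=\ker\partial$ is algebraically closed. Operators: $\mathcal K[\partial]$ with $\partial a=a\partial+a'$; pseudodifferential with $\partial^{-1}a=\sum_{n\ge0}(-1)^na^{(n)}\partial^{-n-1}$; $\mathcal K(\partial)$ is the field of rational operators $AB^{-1}$. $d(B)$ denotes the degree in $\partial$. $(A_0,B_0)$ is a minimal right fractional decomposition of $L$ if $L=A_0B_0^{-1}$ and every $(A,B)$ with $L=AB^{-1}$ satisfies $A=A_0D$, $B=B_0D$ for a differential operator $D$. The adjoint $*$ is the anti-involution with $\partial^*=-\partial$, $f^*=f$. A differential operator $P$ has full kernel in $\mathcal K$ if $\dim_{\mathcal C}\operatorname{Ker}_{\mathcal K}P=d(P)$. A right least common multiple of operators $P_1,\dots,P_n$ is a generator of the right ideal $\bigcap_iP_i\mathcal K[\partial]$. *)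

theory Defs
  imports Main "HOL-Computational_Algebra.Polynomial"
begin

text \<open>A differential field: a field of characteristic 0 (type class) with a derivation der,
  whose field of constants C = {c. der c = 0} is algebraically closed.\<close>

definition diff_field :: "('a::field_char_0 \<Rightarrow> 'a) \<Rightarrow> bool" where
  "diff_field der \<longleftrightarrow>
     (\<forall>a b. der (a + b) = der a + der b) \<and>
     (\<forall>a b. der (a * b) = der a * b + a * der b) \<and>
     (\<forall>p :: 'a poly. 0 < degree p \<and> (\<forall>i. der (coeff p i) = 0)
         \<longrightarrow> (\<exists>x. der x = 0 \<and> poly p x = 0))"

text \<open>Pseudodifferential operators: P represents sum over n of (P n) times the n-th power of
  the derivation symbol, with support bounded above.\<close>

type_synonym 'a pdo = "int \<Rightarrow> 'a"

definition is_pdo :: "'a::zero pdo \<Rightarrow> bool" where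
  "is_pdo P \<longleftrightarrow> (\<exists>N. \<forall>n>N. P n = 0)"

definition is_diffop :: "'a::zero pdo \<Rightarrow> bool" where
  "is_diffop P \<longleftrightarrow> is_pdo P \<and> (\<forall>n<0. P n = 0)"

definition dord :: "'a::zero pdo \<Rightarrow> nat" where
  "dord P = nat (Max {n. P n \<noteq> 0})"

text \<open>Product of pseudodifferential operators:
  (a D^m)(b D^n) = sum over k of (m gchoose k) a b^(k) D^(m+n-k).\<close>
definition pmult :: "('a::field_char_0 \<Rightarrow> 'a) \<Rightarrow> 'a pdo \<Rightarrow> 'a pdo \<Rightarrow> 'a pdo" where
  "pmult der P Q = (\<lambda>j. \<Sum>(m, k) \<in> {(m, k::nat). P m \<noteq> 0 \<and> Q (j + int k - m) \<noteq> 0}.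
        ((of_int m :: 'a) gchoose k) * P m * (der ^^ k) (Q (j + int k - m)))"

definition apply_op :: "('a::field_char_0 \<Rightarrow> 'a) \<Rightarrow> 'a pdo \<Rightarrow> 'a \<Rightarrow> 'a" where
  "apply_op der P f = (\<Sum>n \<in> {n. P n \<noteq> 0}. P n * (der ^^ nat n) f)"

definition kernel :: "('a::field_char_0 \<Rightarrow> 'a) \<Rightarrow> 'a pdo \<Rightarrow> 'a set" where
  "kernel der P = {f. apply_op der P f = 0}"

definition lin_indep_C :: "('a::field_char_0 \<Rightarrow> 'a) \<Rightarrow> nat \<Rightarrow> (nat \<Rightarrow> 'a) \<Rightarrow> bool" where
  "lin_indep_C der n f \<longleftrightarrow>
     (\<forall>c. (\<forall>i<n. der (c i) = 0) \<and> (\<Sum>i<n. c i * f i) = 0 \<longrightarrow> (\<forall>i<n. c i = 0))"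

definition span_C :: "('a::field_char_0 \<Rightarrow> 'a) \<Rightarrow> nat \<Rightarrow> (nat \<Rightarrow> 'a) \<Rightarrow> 'a set" where
  "span_C der n f = {\<Sum>i<n. c i * f i | c. \<forall>i<n. der (c i) = 0}"

definition full_kernel :: "('a::field_char_0 \<Rightarrow> 'a) \<Rightarrow> 'a pdo \<Rightarrow> bool" where
  "full_kernel der P \<longleftrightarrow>
     (\<exists>b. lin_indep_C der (dord P) b \<and> span_C der (dord P) b = kernel der P)"

text \<open>Formal adjoint of a differential operator: (a D^n)^* = (-D)^n a.\<close>
definition adjoint :: "('a::field_char_0 \<Rightarrow> 'a) \<Rightarrow> 'a pdo \<Rightarrow> 'a pdo" where
  "adjoint der P = (\<lambda>j. if j < 0 then 0 else
      (\<Sum>n \<in> {n. P n \<noteq> 0 \<and> j \<le> n}.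
         (-1) ^ nat n * of_nat (nat n choose nat (n - j)) * (der ^^ nat (n - j)) (P n)))"

text \<open>L = A B^{-1} with A, B differential operators, B nonzero (equivalently L B = A).\<close>
definition right_frac :: "('a::field_char_0 \<Rightarrow> 'a) \<Rightarrow> 'a pdo \<Rightarrow> 'a pdo \<Rightarrow> 'a pdo \<Rightarrow> bool" where
  "right_frac der L A B \<longleftrightarrow> is_diffop A \<and> is_diffop B \<and> (\<exists>n. B n \<noteq> 0) \<and> pmult der L B = A"

definition minimal_rfd :: "('a::field_char_0 \<Rightarrow> 'a) \<Rightarrow> 'a pdo \<Rightarrow> 'a pdo \<Rightarrow> 'a pdo \<Rightarrow> bool" where
  "minimal_rfd der L A B \<longleftrightarrow> right_frac der L A B \<and>
     (\<forall>A' B'. right_frac der L A' B' \<longrightarrow>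
        (\<exists>D. is_diffop D \<and> A' = pmult der A D \<and> B' = pmult der B D))"

text \<open>The operator E + sum_{i<n} p_i D^{-1} q_i, where
  p D^{-1} q = sum_{k>=0} (-1)^k p q^(k) D^{-k-1}.\<close>
definition wnl_form :: "('a::field_char_0 \<Rightarrow> 'a) \<Rightarrow> 'a pdo \<Rightarrow> nat \<Rightarrow> (nat \<Rightarrow> 'a) \<Rightarrow> (nat \<Rightarrow> 'a) \<Rightarrow> 'a pdo" where
  "wnl_form der E n p q = (\<lambda>j. E j + (if j < 0 then
      (\<Sum>i<n. p i * (-1) ^ nat (- j - 1) * (der ^^ nat (- j - 1)) (q i)) else 0))"

definition weakly_nonlocal :: "('a::field_char_0 \<Rightarrow> 'a) \<Rightarrow> 'a pdo \<Rightarrow> bool" where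
  "weakly_nonlocal der L \<longleftrightarrow> (\<exists>E n p q. is_diffop E \<and> L = wnl_form der E n p q)"

definition is_right_lcm :: "('a::field_char_0 \<Rightarrow> 'a) \<Rightarrow> 'a pdo \<Rightarrow> nat \<Rightarrow> (nat \<Rightarrow> 'a pdo) \<Rightarrow> bool" where
  "is_right_lcm der B n P \<longleftrightarrow> is_diffop B \<and>
     (\<forall>i<n. \<exists>X. is_diffop X \<and> B = pmult der (P i) X) \<and>
     (\<forall>M. is_diffop M \<and> (\<forall>i<n. \<exists>Y. is_diffop Y \<and> M = pmult der (P i) Y)
          \<longrightarrow> (\<exists>Z. is_diffop Z \<and> M = pmult der B Z))"

definition inv_coeff_D :: "'a::field \<Rightarrow> 'a pdo" where
  "inv_coeff_D q = (\<lambda>j. if j = 1 then inverse q else 0)"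

end

theory Submission
  imports Defs "HOL-Computational_Algebra.Formal_Power_Series"
begin

text \<open>
  The key computation is that of the product of \<open>B\<close> with a weakly non-local operator
  \<open>N = E + \<Sum>\<^sub>i p\<^sub>i \<partial>\<^sup>-\<^sup>1 q\<^sub>i\<close>: one has \<open>N B = D + \<Sum>\<^sub>i p\<^sub>i \<partial>\<^sup>-\<^sup>1 r\<^sub>i\<close> with \<open>D\<close> differential and
  \<open>r\<^sub>i = B\<^sup>* q\<^sub>i\<close>, and \<open>B N = D' + \<Sum>\<^sub>i (B p\<^sub>i) \<partial>\<^sup>-\<^sup>1 q\<^sub>i\<close>. When the \<open>p\<^sub>i\<close> (resp. \<open>q\<^sub>i\<close>) are
  linearly independent over the constants, the non-local tail vanishes only if all
  \<open>r\<^sub>i\<close> (resp. all \<open>B p\<^sub>i\<close>) vanish. Hence \<open>L B\<close> is differential iff \<open>B\<^sup>*\<close> kills the \<open>q\<^sub>i\<close>;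
  minimality of \<open>B\<close> together with an operator of order \<open>n\<close> with this property (built one
  factor at a time) gives \<open>d(B) = n\<close> and identifies \<open>Ker B\<^sup>*\<close> and the right lcm.
  Conversely, if \<open>B\<close> or \<open>B\<^sup>*\<close> has a full kernel, peeling off one first-order factor
  \<open>\<partial> - \<phi>'/\<phi>\<close> per kernel element produces a weakly non-local inverse of \<open>B\<close>, so \<open>L = A B\<^sup>-\<^sup>1\<close>
  is weakly non-local, and applying the first part to this inverse gives full kernels
  for both \<open>B\<close> and \<open>B\<^sup>*\<close>.
\<close>

section \<open>Derivations\<close>

locale derivation =
  fixes der :: "'a::field_char_0 \<Rightarrow> 'a"
  assumes der_add: "\<And>a b. der (a + b) = der a + der b"
    and der_mult: "\<And>a b. der (a * b) = der a * b + a * der b"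
begin

abbreviation dk :: "nat \<Rightarrow> 'a \<Rightarrow> 'a" where "dk k \<equiv> der ^^ k"

lemma der_0[simp]: "der 0 = 0"
  using der_add[of 0 0] by simp

lemma der_1[simp]: "der 1 = 0"
  using der_mult[of 1 1] by simp

lemma der_minus[simp]: "der (- a) = - der a"
  using der_add[of a "-a"] by (simp add: eq_neg_iff_add_eq_0 add.commute)

lemma der_diff: "der (a - b) = der a - der b"
  using der_add[of a "-b"] by simp

lemma der_sum: "der (\<Sum>i\<in>S. f i) = (\<Sum>i\<in>S. der (f i))"
  by (induction S rule: infinite_finite_induct) (auto simp: der_add)

lemma der_prod_const: "(\<And>i. i \<in> S \<Longrightarrow> der (f i) = 0) \<Longrightarrow> der (prod f S) = 0"
  by (induction S rule: infinite_finite_induct) (auto simp: der_mult)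

lemma der_of_nat[simp]: "der (of_nat n) = 0"
  by (induction n) (auto simp: der_add)

lemma der_of_int[simp]: "der (of_int n) = 0"
  by (cases n rule: int_cases) (auto simp: der_diff)

lemma der_const_mult: "der c = 0 \<Longrightarrow> der (c * a) = c * der a"
  by (simp add: der_mult)

lemma der_inverse: "a \<noteq> 0 \<Longrightarrow> der (inverse a) = - der a * inverse a * inverse a"
proof -
  assume a: "a \<noteq> 0"
  have "der a * inverse a + a * der (inverse a) = 0"
    using der_mult[of a "inverse a"] a by simp
  hence "a * der (inverse a) = - der a * inverse a"
    by (metis add_diff_cancel_left' diff_0 mult_minus_left)
  hence "inverse a * (a * der (inverse a)) = inverse a * (- der a * inverse a)" by simp
  thus ?thesis using a by (simp add: field_simps)
qed

lemma der_inverse_const: "der c = 0 \<Longrightarrow> der (inverse c) = 0"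
  by (cases "c = 0") (auto simp: der_inverse)

lemma der_divide_const: "der c = 0 \<Longrightarrow> der d = 0 \<Longrightarrow> der (c / d) = 0"
  by (simp add: divide_inverse der_mult der_inverse_const)

lemma der_divide_mult: "b \<noteq> 0 \<Longrightarrow> b * der (a / b) = der a - der b / b * a"
proof -
  assume b: "b \<noteq> 0"
  have h: "der (a / b) = der a * inverse b + a * (- der b * inverse b * inverse b)"
    by (simp add: divide_inverse der_mult der_inverse[OF b])
  have "b * der (a / b) = b * (der a * inverse b + a * (- der b * inverse b * inverse b))"
    by (simp only: h)
  also have "\<dots> = der a * (b * inverse b) - der b * inverse b * a * (b * inverse b)"
    by (simp add: algebra_simps)
  also have "\<dots> = der a - der b / b * a" using b by (simp add: divide_inverse)
  finally show ?thesis .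
qed

lemma der_gchoose[simp]: "der (of_int m gchoose k) = 0"
proof -
  have "der (\<Prod>i=0..<k. (of_int m :: 'a) - of_nat i) = 0"
    by (rule der_prod_const) (simp add: der_diff)
  moreover have "der (fact k :: 'a) = 0"
    by (metis der_of_nat of_nat_fact)
  ultimately show ?thesis
    by (simp add: gbinomial_prod_rev divide_inverse der_mult der_inverse_const)
qed

lemma dk_add: "dk k (a + b) = dk k a + dk k b"
  by (induction k) (auto simp: der_add)

lemma dk_0[simp]: "dk k 0 = 0"
  by (induction k) auto

lemma dk_sum: "dk k (\<Sum>i\<in>S. f i) = (\<Sum>i\<in>S. dk k (f i))"
  by (induction k) (auto simp: der_sum)

lemma dk_const_mult: "der c = 0 \<Longrightarrow> dk k (c * a) = c * dk k a"
  by (induction k) (auto simp: der_const_mult)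

lemma dk_const: "der c = 0 \<Longrightarrow> dk k c = (if k = 0 then c else 0)"
  by (induction k) auto

lemma dk_add_nat: "dk (i + j) a = dk i (dk j a)"
  by (simp add: funpow_add)

lemma dk_mult_leibniz: "dk n (a * b) = (\<Sum>k\<le>n. of_nat (n choose k) * dk k a * dk (n - k) b)"
proof (induction n)
  case 0
  then show ?case by simp
next
  case (Suc n)
  define f where "f k = dk k a * dk (Suc n - k) b" for k
  have "dk (Suc n) (a * b) = der (\<Sum>k\<le>n. of_nat (n choose k) * dk k a * dk (n - k) b)"
    using Suc.IH by simp
  also have "\<dots> = (\<Sum>k\<le>n. of_nat (n choose k) * (dk (Suc k) a * dk (n-k) b)) +
      (\<Sum>k\<le>n. of_nat (n choose k) * (dk k a * dk (Suc (n - k)) b))"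
    by (simp add: der_sum der_mult der_add sum.distrib distrib_left mult.assoc)
  also have "(\<Sum>k\<le>n. of_nat (n choose k) * (dk k a * dk (Suc (n - k)) b))
      = (\<Sum>k\<le>n. of_nat (n choose k) * f k)"
    by (rule sum.cong) (auto simp: f_def Suc_diff_le)
  also have "(\<Sum>k\<le>n. of_nat (n choose k) * f k) = (\<Sum>k\<le>Suc n. of_nat (n choose k) * f k)"
    by simp
  also have "\<dots> = f 0 + (\<Sum>k\<le>n. of_nat (n choose Suc k) * f (Suc k))"
    by (subst sum.atMost_Suc_shift) simp
  also have "(\<Sum>k\<le>n. of_nat (n choose k) * (dk (Suc k) a * dk (n-k) b))
     = (\<Sum>k\<le>n. of_nat (n choose k) * f (Suc k))"
    by (rule sum.cong) (auto simp: f_def)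
  finally have 1: "dk (Suc n) (a * b) = (\<Sum>k\<le>n. of_nat (n choose k) * f (Suc k)) +
      (f 0 + (\<Sum>k\<le>n. of_nat (n choose Suc k) * f (Suc k)))" .
  have "(\<Sum>k\<le>Suc n. of_nat (Suc n choose k) * dk k a * dk (Suc n - k) b)
      = (\<Sum>k\<le>Suc n. of_nat (Suc n choose k) * f k)"
    by (rule sum.cong) (auto simp: f_def)
  also have "\<dots> = f 0 + (\<Sum>k\<le>n. of_nat (Suc n choose Suc k) * f (Suc k))"
    by (subst sum.atMost_Suc_shift) simp
  also have "\<dots> = f 0 + (\<Sum>k\<le>n. of_nat (n choose k) * f (Suc k)) +
      (\<Sum>k\<le>n. of_nat (n choose Suc k) * f (Suc k))"
    by (simp add: sum.distrib distrib_right)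
  finally have 2: "(\<Sum>k\<le>Suc n. of_nat (Suc n choose k) * dk k a * dk (Suc n - k) b) =
     f 0 + (\<Sum>k\<le>n. of_nat (n choose k) * f (Suc k)) +
     (\<Sum>k\<le>n. of_nat (n choose Suc k) * f (Suc k))" .
  show ?case unfolding 1 2 by (simp only: ac_simps)
qed

end

lemma diff_field_derivation: "diff_field der \<Longrightarrow> derivation der"
  unfolding diff_field_def derivation_def by blast

section \<open>Products of pseudodifferential operators\<close>

lemma gbinomial_of_int_nonneg: "m \<ge> 0 \<Longrightarrow> (of_int m gchoose k :: 'a::field_char_0) = of_nat (nat m choose k)"
  by (metis binomial_gbinomial int_nat_eq of_int_of_nat_eq)

lemma gbinomial_of_int_large: "m \<ge> 0 \<Longrightarrow> int k > m \<Longrightarrow> (of_int m gchoose k :: 'a::field_char_0) = 0"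
  by (simp add: gbinomial_of_int_nonneg)

lemma gbinomial_of_int_self: "m \<ge> 0 \<Longrightarrow> (of_int m gchoose nat m :: 'a::field_char_0) = 1"
  by (simp add: gbinomial_of_int_nonneg)

declare gbinomial_0_left[simp]

lemma gbinomial_1_left[simp]: "((1::'a::field_char_0) gchoose k) = (if k \<le> 1 then 1 else 0)"
proof (cases k)
  case (Suc k') then show ?thesis
    using gbinomial_Suc_Suc[of "0::'a" k'] by (simp add: gbinomial_0_left)
qed simp

lemma gbinomial_minus_1_left[simp]: "((-1::'a::field_char_0) gchoose k) = (-1) ^ k"
  using gbinomial_minus[of "1::'a" k] by (simp add: binomial_gbinomial[symmetric])

lemma gbinomial_trinomial_Vandermonde:
  fixes a c :: "'a::field_char_0"
  shows "(\<Sum>v\<le>k. (a gchoose (i + v)) * of_nat ((i + v) choose i) * (c gchoose (k - v)))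
       = (a gchoose i) * ((a - of_nat i + c) gchoose k)"
proof -
  have "(a gchoose (i + v)) * of_nat ((i + v) choose i) = (a gchoose i) * ((a - of_nat i) gchoose v)" for v
    using gbinomial_trinomial_revision[of i "i + v" a] by (simp add: binomial_gbinomial)
  hence "(\<Sum>v\<le>k. (a gchoose (i + v)) * of_nat ((i + v) choose i) * (c gchoose (k - v)))
      = (a gchoose i) * (\<Sum>v\<le>k. ((a - of_nat i) gchoose v) * (c gchoose (k - v)))"
    by (simp add: sum_distrib_left mult.assoc)
  also have "(\<Sum>v\<le>k. ((a - of_nat i) gchoose v) * (c gchoose (k - v))) = (a - of_nat i + c) gchoose k"
    unfolding atMost_atLeast0 by (rule gbinomial_Vandermonde)
  finally show ?thesis .
qed

text \<open>A term of \<open>P (Q R)\<close> is indexed by \<open>(m,t,n,s,u)\<close>: the coefficient \<open>P\<^sub>m\<close>, the power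
  \<open>\<partial>\<^sup>t\<close> moved past \<open>Q\<^sub>n \<partial>\<^sup>s R\<close>, and the Leibniz index \<open>u\<close>; a term of \<open>(P Q) R\<close> is indexed by
  \<open>(l,k\<^sub>2,m,k\<^sub>1)\<close>. The map below sends the former to the latter.\<close>

definition assoc_reindex :: "int \<times> nat \<times> int \<times> nat \<times> nat \<Rightarrow> int \<times> nat \<times> int \<times> nat" where
  "assoc_reindex = (\<lambda>(m,t,n,s,u). (n + m - int u, t - u + s, m, u))"

lemma sum_assoc_reindex_fibre:
  fixes F5 :: "int \<times> nat \<times> int \<times> nat \<times> nat \<Rightarrow> 'a::comm_monoid_add"
  assumes fin: "finite B5" and s5: "\<And>x. F5 x \<noteq> 0 \<Longrightarrow> x \<in> B5"
    and tri: "\<And>m t n s u. F5 (m,t,n,s,u) \<noteq> 0 \<Longrightarrow> u \<le> t"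
  shows "sum F5 {x \<in> B5. assoc_reindex x = (l, k2, m, k1)}
    = (\<Sum>v\<le>k2. F5 (m, k1+v, l + int k1 - m, k2 - v, k1))"
proof -
  define y where "y = (l, k2, m, k1)"
  define g where "g = (\<lambda>v. (m, k1+v, l + int k1 - m, k2 - v, k1))"
  define X where "X = g ` {..k2}"
  have "sum F5 {x \<in> B5. assoc_reindex x = y} = sum F5 ({x \<in> B5. assoc_reindex x = y} \<inter> X)"
  proof (rule sum.mono_neutral_right)
    show "\<forall>x\<in>{x \<in> B5. assoc_reindex x = y} - {x \<in> B5. assoc_reindex x = y} \<inter> X. F5 x = 0"
    proof (rule ballI, rule ccontr)
      fix x assume x: "x \<in> {x \<in> B5. assoc_reindex x = y} - {x \<in> B5. assoc_reindex x = y} \<inter> X"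
        and nz: "F5 x \<noteq> 0"
      obtain m' t n s u where xx: "x = (m', t, n, s, u)" by (cases x) auto
      have ut: "u \<le> t" using tri nz xx by blast
      have eq: "(n + m' - int u, t - u + s, m', u) = (l, k2, m, k1)"
        using x xx by (auto simp: assoc_reindex_def y_def)
      have "x = g (t - k1)" "t - k1 \<le> k2" using eq ut by (auto simp: g_def xx)
      hence "x \<in> X" by (auto simp: X_def)
      thus False using x by auto
    qed
  qed (use fin in auto)
  also have "\<dots> = sum F5 X"
  proof (rule sum.mono_neutral_left)
    show "\<forall>x\<in>X - {x \<in> B5. assoc_reindex x = y} \<inter> X. F5 x = 0"
      using s5 by (auto simp: X_def g_def assoc_reindex_def y_def)
  qed (auto simp: X_def)
  also have "\<dots> = (\<Sum>v\<le>k2. F5 (g v))"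
    unfolding X_def by (rule sum.reindex_cong[OF _ refl refl]) (auto simp: inj_on_def g_def)
  finally show ?thesis by (simp add: g_def y_def)
qed

lemma sum_regroup_assoc:
  fixes F5 :: "int \<times> nat \<times> int \<times> nat \<times> nat \<Rightarrow> 'a::comm_monoid_add"
    and F4 :: "int \<times> nat \<times> int \<times> nat \<Rightarrow> 'a"
  assumes fin: "finite B5" "finite B4"
    and s5: "\<And>x. F5 x \<noteq> 0 \<Longrightarrow> x \<in> B5"
    and s4: "\<And>y. F4 y \<noteq> 0 \<Longrightarrow> y \<in> B4"
    and tri: "\<And>m t n s u. F5 (m,t,n,s,u) \<noteq> 0 \<Longrightarrow> u \<le> t"
    and fib: "\<And>l k2 m k1. (\<Sum>v\<le>k2. F5 (m, k1+v, l + int k1 - m, k2 - v, k1)) = F4 (l,k2,m,k1)"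
  shows "sum F5 B5 = sum F4 B4"
proof -
  define T where "T = assoc_reindex ` B5 \<union> B4"
  have finT: "finite T" using fin by (simp add: T_def)
  have "sum F5 B5 = (\<Sum>y\<in>T. sum F5 {x \<in> B5. assoc_reindex x = y})"
    by (rule sum.group[symmetric]) (use fin finT in \<open>auto simp: T_def\<close>)
  also have "\<dots> = (\<Sum>y\<in>T. F4 y)"
  proof (rule sum.cong[OF refl])
    fix y :: "int \<times> nat \<times> int \<times> nat"
    obtain l k2 m k1 where y: "y = (l, k2, m, k1)" by (cases y) auto
    have "sum F5 {x \<in> B5. assoc_reindex x = y} = (\<Sum>v\<le>k2. F5 (m, k1+v, l + int k1 - m, k2 - v, k1))"
      unfolding y by (rule sum_assoc_reindex_fibre) (use fin s5 tri in blast)+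
    thus "sum F5 {x \<in> B5. assoc_reindex x = y} = F4 y" using fib y by simp
  qed
  also have "\<dots> = sum F4 B4"
    by (rule sum.mono_neutral_right[OF finT]) (use s4 in \<open>auto simp: T_def\<close>)
  finally show ?thesis .
qed

lemma sum_atLeastAtMost_int_nat: "(\<Sum>j\<in>{0..int M}. f j) = (\<Sum>k\<in>{0..M}. f (int k))"
proof -
  have "{0..int M} = int ` {0..M}" by (simp add: image_int_atLeastAtMost)
  thus ?thesis by (simp add: sum.reindex)
qed

definition skip_index :: "nat \<Rightarrow> nat \<Rightarrow> nat" where
  "skip_index j i = (if i < j then i else Suc i)"

lemma sum_lessThan_Suc_remove:
  assumes j: "j < Suc n"
  shows "(\<Sum>i<Suc n. f i) = f j + (\<Sum>i<n. f (skip_index j i))"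
proof -
  define \<tau> where "\<tau> i = (if i < j then i else Suc i)" for i
  have inj: "inj_on \<tau> {..<n}" by (auto simp: inj_on_def \<tau>_def split: if_splits)
  have im: "\<tau> ` {..<n} = {..<Suc n} - {j}"
  proof
    show "\<tau> ` {..<n} \<subseteq> {..<Suc n} - {j}" using j by (auto simp: \<tau>_def)
    show "{..<Suc n} - {j} \<subseteq> \<tau> ` {..<n}"
    proof
      fix x assume x: "x \<in> {..<Suc n} - {j}"
      show "x \<in> \<tau> ` {..<n}"
      proof (cases "x < j")
        case True
        hence "x = \<tau> x" "x < n" using j by (auto simp: \<tau>_def)
        thus ?thesis by blast
      next
        case False
        hence "x = \<tau> (x - 1)" "x - 1 < n" using x by (auto simp: \<tau>_def)
        thus ?thesis by blast
      qed
    qed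
  qed
  have "(\<Sum>i<Suc n. f i) = f j + (\<Sum>i\<in>{..<Suc n} - {j}. f i)"
    by (rule sum.remove) (use j in auto)
  also have "(\<Sum>i\<in>{..<Suc n} - {j}. f i) = (\<Sum>i<n. f (\<tau> i))"
    unfolding im[symmetric] by (rule sum.reindex[OF inj, unfolded comp_def])
  finally show ?thesis by (simp add: \<tau>_def skip_index_def)
qed

context derivation begin

abbreviation pm :: "'a pdo \<Rightarrow> 'a pdo \<Rightarrow> 'a pdo" where "pm \<equiv> pmult der"

definition deg_le :: "'a pdo \<Rightarrow> int \<Rightarrow> bool" where
  "deg_le P N \<longleftrightarrow> (\<forall>n>N. P n = 0)"

lemma deg_le_zero: "deg_le P N \<Longrightarrow> n > N \<Longrightarrow> P n = 0"
  by (simp add: deg_le_def)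

lemma is_pdo_iff_deg_le: "is_pdo P \<longleftrightarrow> (\<exists>N. deg_le P N)"
  by (simp add: is_pdo_def deg_le_def)

lemma deg_le_mono: "deg_le P N \<Longrightarrow> N \<le> M \<Longrightarrow> deg_le P M"
  by (simp add: deg_le_def)

lemma is_pdo_common_deg_le: "is_pdo P \<Longrightarrow> is_pdo Q \<Longrightarrow> \<exists>N. deg_le P N \<and> deg_le Q N"
  by (metis deg_le_mono is_pdo_iff_deg_le max.cobounded1 max.cobounded2)

lemma is_pdo_deg_le_nat: "is_pdo P \<Longrightarrow> \<exists>M::nat. deg_le P (int M)"
proof -
  assume "is_pdo P"
  then obtain N where "deg_le P N" using is_pdo_iff_deg_le by blast
  hence "deg_le P (int (nat N))" by (rule deg_le_mono) simp
  thus ?thesis by blast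
qed

lemma pmult_box:
  assumes "deg_le P NP" "deg_le Q NQ" "finite M" "finite K"
    "{j - NQ..NP} \<subseteq> M" "{0..nat (NP + NQ - j)} \<subseteq> K"
  shows "pm P Q j = (\<Sum>m\<in>M. \<Sum>k\<in>K. (of_int m gchoose k) * P m * dk k (Q (j + int k - m)))"
proof -
  let ?S = "{(m, k::nat). P m \<noteq> 0 \<and> Q (j + int k - m) \<noteq> 0}"
  let ?t = "\<lambda>(m, k). (of_int m gchoose k) * P m * dk k (Q (j + int k - m))"
  have sub: "?S \<subseteq> M \<times> K"
  proof
    fix x assume "x \<in> ?S"
    then obtain m k where x: "x = (m, k)" "P m \<noteq> 0" "Q (j + int k - m) \<noteq> 0" by auto
    have "m \<le> NP" by (metis assms(1) deg_le_zero not_le x(2))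
    moreover have "j + int k - m \<le> NQ" by (metis assms(2) deg_le_zero not_le x(3))
    ultimately have "m \<in> {j - NQ..NP}" "k \<in> {0..nat (NP + NQ - j)}" by auto
    thus "x \<in> M \<times> K" using x assms(5,6) by auto
  qed
  have "pm P Q j = sum ?t ?S"
    by (simp add: pmult_def)
  also have "\<dots> = sum ?t (M \<times> K)"
    by (rule sum.mono_neutral_left) (use sub assms(3,4) in auto)
  also have "\<dots> = (\<Sum>m\<in>M. \<Sum>k\<in>K. (of_int m gchoose k) * P m * dk k (Q (j + int k - m)))"
    by (simp add: sum.cartesian_product)
  finally show ?thesis .
qed

lemma deg_le_pmult:
  assumes "deg_le P NP" "deg_le Q NQ"
  shows "deg_le (pm P Q) (NP + NQ)"
  unfolding deg_le_def
proof (intro allI impI)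
  fix j assume j: "j > NP + NQ"
  have "pm P Q j = (\<Sum>m\<in>{}. \<Sum>k\<in>{0..nat (NP + NQ - j)}. (of_int m gchoose k) * P m * dk k (Q (j + int k - m)))"
    by (rule pmult_box[OF assms]) (use j in auto)
  thus "pm P Q j = 0" by simp
qed

lemma pmult_eq_double_sum:
  assumes "is_pdo P" "is_pdo Q" "finite M" "finite K"
    "\<And>m k. (of_int m gchoose k) * P m * dk k (Q (j + int k - m)) \<noteq> 0 \<Longrightarrow> m \<in> M \<and> k \<in> K"
  shows "pm P Q j = (\<Sum>m\<in>M. \<Sum>k\<in>K. (of_int m gchoose k) * P m * dk k (Q (j + int k - m)))"
proof -
  obtain NP NQ where b: "deg_le P NP" "deg_le Q NQ" using assms(1,2) is_pdo_iff_deg_le by blast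
  let ?M = "{j - NQ..NP} \<union> M" and ?K = "{0..nat (NP + NQ - j)} \<union> K"
  let ?t = "\<lambda>m k. (of_int m gchoose k) * P m * dk k (Q (j + int k - m))"
  have "pm P Q j = (\<Sum>m\<in>?M. \<Sum>k\<in>?K. ?t m k)"
    by (rule pmult_box[OF b]) (use assms in auto)
  also have "\<dots> = (\<Sum>(m,k)\<in>?M \<times> ?K. ?t m k)" by (simp add: sum.cartesian_product)
  also have "\<dots> = (\<Sum>(m,k)\<in>M \<times> K. ?t m k)"
    by (rule sum.mono_neutral_right) (use assms in auto)
  also have "\<dots> = (\<Sum>m\<in>M. \<Sum>k\<in>K. ?t m k)" by (simp add: sum.cartesian_product)
  finally show ?thesis .
qed

definition assoc_left_term :: "'a pdo \<Rightarrow> 'a pdo \<Rightarrow> 'a pdo \<Rightarrow> int \<Rightarrow> int \<times> nat \<times> int \<times> nat \<Rightarrow> 'a" where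
  "assoc_left_term P Q R j = (\<lambda>(l,k2,m,k1). (of_int l gchoose k2)
     * ((of_int m gchoose k1) * P m * dk k1 (Q (l + int k1 - m))) * dk k2 (R (j + int k2 - l)))"

definition assoc_right_term :: "'a pdo \<Rightarrow> 'a pdo \<Rightarrow> 'a pdo \<Rightarrow> int \<Rightarrow> int \<times> nat \<times> int \<times> nat \<times> nat \<Rightarrow> 'a" where
  "assoc_right_term P Q R j = (\<lambda>(m,t,n,s,u). if u \<le> t then (of_int m gchoose t) * P m
     * ((of_int n gchoose s) * (of_nat (t choose u) * dk u (Q n) * dk (t - u + s) (R (j + int t - m + int s - n))))
     else 0)"

lemma pmult_pmult_left_eq_sum:
  assumes P: "deg_le P NP" and Q: "deg_le Q NQ" and R: "deg_le R NR"
    and C: "C = \<bar>NP\<bar> + \<bar>NQ\<bar> + \<bar>NR\<bar> + \<bar>j\<bar>"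
  shows "pm (pm P Q) R j = sum (assoc_left_term P Q R j) ({-C..C} \<times> {0..nat C} \<times> {-4*C..4*C} \<times> {0..nat (4*C)})"
proof -
  have abs_bounds: "NP \<le> \<bar>NP\<bar>" "-\<bar>NP\<bar> \<le> NP" "NQ \<le> \<bar>NQ\<bar>" "-\<bar>NQ\<bar> \<le> NQ"
    "NR \<le> \<bar>NR\<bar>" "-\<bar>NR\<bar> \<le> NR" "j \<le> \<bar>j\<bar>" "-\<bar>j\<bar> \<le> j" by auto
  define I1 where "I1 = {-C..C}"
  define K1 where "K1 = {0..nat C}"
  define I2 where "I2 = {-4*C..4*C}"
  define K2 where "K2 = {0..nat (4*C)}"
  have fins: "finite I1" "finite K1" "finite I2" "finite K2"
    by (auto simp: I1_def I2_def K1_def K2_def)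
  define F4 where "F4 = assoc_left_term P Q R j"
  have "pm (pm P Q) R j = (\<Sum>l\<in>I1. \<Sum>k2\<in>K1. (of_int l gchoose k2) * pm P Q l * dk k2 (R (j + int k2 - l)))"
    by (rule pmult_box[OF deg_le_pmult[OF P Q] R fins(1,2)]) (use abs_bounds in \<open>auto intro!: nat_mono simp: I1_def K1_def C\<close>)
  also have "\<dots> = (\<Sum>l\<in>I1. \<Sum>k2\<in>K1. \<Sum>m\<in>I2. \<Sum>k1\<in>K2. F4 (l,k2,m,k1))"
  proof (intro sum.cong refl)
    fix l k2 assume l: "l \<in> I1" and "k2 \<in> K1"
    have "pm P Q l = (\<Sum>m\<in>I2. \<Sum>k1\<in>K2. (of_int m gchoose k1) * P m * dk k1 (Q (l + int k1 - m)))"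
      by (rule pmult_box[OF P Q fins(3,4)]) (use abs_bounds l in \<open>auto intro!: nat_mono simp: I1_def I2_def K2_def C\<close>)
    thus "(of_int l gchoose k2) * pm P Q l * dk k2 (R (j + int k2 - l)) = (\<Sum>m\<in>I2. \<Sum>k1\<in>K2. F4 (l,k2,m,k1))"
      by (simp add: F4_def assoc_left_term_def sum_distrib_left sum_distrib_right)
  qed
  also have "\<dots> = sum F4 (I1 \<times> K1 \<times> I2 \<times> K2)"
    by (simp add: sum.cartesian_product split_def)
  finally show ?thesis by (simp add: F4_def I1_def K1_def I2_def K2_def)
qed

lemma pmult_pmult_right_eq_sum:
  assumes P: "deg_le P NP" and Q: "deg_le Q NQ" and R: "deg_le R NR"
    and C: "C = \<bar>NP\<bar> + \<bar>NQ\<bar> + \<bar>NR\<bar> + \<bar>j\<bar>"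
  shows "pm P (pm Q R) j = sum (assoc_right_term P Q R j) ({-C..C} \<times> {0..nat C} \<times> {-4*C..4*C} \<times> {0..nat (4*C)} \<times> {0..nat C})"
proof -
  have abs_bounds: "NP \<le> \<bar>NP\<bar>" "-\<bar>NP\<bar> \<le> NP" "NQ \<le> \<bar>NQ\<bar>" "-\<bar>NQ\<bar> \<le> NQ"
    "NR \<le> \<bar>NR\<bar>" "-\<bar>NR\<bar> \<le> NR" "j \<le> \<bar>j\<bar>" "-\<bar>j\<bar> \<le> j" by auto
  define I1 where "I1 = {-C..C}"
  define K1 where "K1 = {0..nat C}"
  define I2 where "I2 = {-4*C..4*C}"
  define K2 where "K2 = {0..nat (4*C)}"
  have fins: "finite I1" "finite K1" "finite I2" "finite K2"
    by (auto simp: I1_def I2_def K1_def K2_def)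
  define F5 where "F5 = assoc_right_term P Q R j"
  have "pm P (pm Q R) j = (\<Sum>m\<in>I1. \<Sum>t\<in>K1. (of_int m gchoose t) * P m * dk t (pm Q R (j + int t - m)))"
    by (rule pmult_box[OF P deg_le_pmult[OF Q R] fins(1,2)]) (use abs_bounds in \<open>auto intro!: nat_mono simp: I1_def K1_def C\<close>)
  also have "\<dots> = (\<Sum>m\<in>I1. \<Sum>t\<in>K1. \<Sum>n\<in>I2. \<Sum>s\<in>K2. \<Sum>u\<in>K1. F5 (m,t,n,s,u))"
  proof (intro sum.cong refl)
    fix m t assume m: "m \<in> I1" and t: "t \<in> K1"
    have "pm Q R (j + int t - m) = (\<Sum>n\<in>I2. \<Sum>s\<in>K2. (of_int n gchoose s) * Q n * dk s (R (j + int t - m + int s - n)))"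
      by (rule pmult_box[OF Q R fins(3,4)]) (use abs_bounds m t in \<open>auto intro!: nat_mono simp: I1_def K1_def I2_def K2_def C\<close>)
    hence "dk t (pm Q R (j + int t - m)) =
        (\<Sum>n\<in>I2. \<Sum>s\<in>K2. (of_int n gchoose s) * dk t (Q n * dk s (R (j + int t - m + int s - n))))"
      by (simp add: dk_sum dk_const_mult mult.assoc)
    also have "\<dots> = (\<Sum>n\<in>I2. \<Sum>s\<in>K2. (of_int n gchoose s) * (\<Sum>u\<le>t. of_nat (t choose u) * dk u (Q n)
        * dk (t - u + s) (R (j + int t - m + int s - n))))"
    proof (intro sum.cong refl arg_cong2[where f = "(*)"])
      fix n s
      show "dk t (Q n * dk s (R (j + int t - m + int s - n))) = (\<Sum>u\<le>t. of_nat (t choose u) * dk u (Q n)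
        * dk (t - u + s) (R (j + int t - m + int s - n)))"
        unfolding dk_mult_leibniz by (rule sum.cong[OF refl]) (simp only: dk_add_nat)
    qed
    also have "\<dots> = (\<Sum>n\<in>I2. \<Sum>s\<in>K2. (of_int n gchoose s) * (\<Sum>u\<in>K1. if u \<le> t then of_nat (t choose u) * dk u (Q n)
        * dk (t - u + s) (R (j + int t - m + int s - n)) else 0))"
    proof (intro sum.cong[OF refl] arg_cong2[where f = "(*)"] refl)
      fix n s
      have "{..t} = {u \<in> K1. u \<le> t}" using t by (auto simp: K1_def)
      thus "(\<Sum>u\<le>t. of_nat (t choose u) * dk u (Q n) * dk (t - u + s) (R (j + int t - m + int s - n))) =
        (\<Sum>u\<in>K1. if u \<le> t then of_nat (t choose u) * dk u (Q n)
        * dk (t - u + s) (R (j + int t - m + int s - n)) else 0)"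
        by (simp add: sum.inter_filter[symmetric] fins)
    qed
    finally show "(of_int m gchoose t) * P m * dk t (pm Q R (j + int t - m)) = (\<Sum>n\<in>I2. \<Sum>s\<in>K2. \<Sum>u\<in>K1. F5 (m,t,n,s,u))"
      by (simp add: F5_def assoc_right_term_def sum_distrib_left if_distrib cong: if_cong)
  qed
  also have "\<dots> = sum F5 (I1 \<times> K1 \<times> I2 \<times> K2 \<times> K1)"
    by (simp add: sum.cartesian_product split_def)
  finally show ?thesis by (simp add: F5_def assoc_right_term_def I1_def K1_def I2_def K2_def)
qed

text \<open>The fibres of the reindexing in \<open>sum_regroup_assoc\<close>: by Vandermonde's identity the
  coefficients of the right-hand product collapse to those of the left-hand one.\<close>

lemma assoc_right_term_fibre:
  "(\<Sum>v\<le>k2. assoc_right_term P Q R j (m, k1+v, l + int k1 - m, k2 - v, k1))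
    = assoc_left_term P Q R j (l,k2,m,k1)"
proof -
  define X where "X = P m * dk k1 (Q (l + int k1 - m)) * dk k2 (R (j + int k2 - l))"
  have "(\<Sum>v\<le>k2. assoc_right_term P Q R j (m, k1+v, l + int k1 - m, k2 - v, k1))
      = (\<Sum>v\<le>k2. (of_int m gchoose (k1+v)) * of_nat ((k1+v) choose k1) * (of_int (l + int k1 - m) gchoose (k2 - v))) * X"
    unfolding sum_distrib_right
  proof (rule sum.cong[OF refl])
    fix v assume v: "v \<in> {..k2}"
    have e1: "k1 + v - k1 + (k2 - v) = k2" using v by auto
    have e2: "j + int (k1 + v) - m + int (k2 - v) - (l + int k1 - m) = j + int k2 - l" using v by auto
    show "assoc_right_term P Q R j (m, k1+v, l + int k1 - m, k2 - v, k1) =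
        (of_int m gchoose (k1+v)) * of_nat ((k1+v) choose k1) * (of_int (l + int k1 - m) gchoose (k2 - v)) * X"
      using v by (simp add: assoc_right_term_def e1 e2 X_def mult_ac of_nat_diff add_diff_eq)
  qed
  also have "(\<Sum>v\<le>k2. (of_int m gchoose (k1+v)) * of_nat ((k1+v) choose k1) * (of_int (l + int k1 - m) gchoose (k2 - v)))
      = (of_int m gchoose k1) * (of_int l gchoose k2)"
    using gbinomial_trinomial_Vandermonde[of "of_int m" k1 "of_int (l + int k1 - m)" k2]
    by simp
  finally show ?thesis by (simp add: assoc_left_term_def X_def mult_ac)
qed

lemma pmult_assoc:
  assumes P: "deg_le P NP" and Q: "deg_le Q NQ" and R: "deg_le R NR"
  shows "pm (pm P Q) R j = pm P (pm Q R) j"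
proof -
  define C where "C = \<bar>NP\<bar> + \<bar>NQ\<bar> + \<bar>NR\<bar> + \<bar>j\<bar>"
  have abs_bounds: "NP \<le> \<bar>NP\<bar>" "-\<bar>NP\<bar> \<le> NP" "NQ \<le> \<bar>NQ\<bar>" "-\<bar>NQ\<bar> \<le> NQ"
    "NR \<le> \<bar>NR\<bar>" "-\<bar>NR\<bar> \<le> NR" "j \<le> \<bar>j\<bar>" "-\<bar>j\<bar> \<le> j" by auto
  define I1 where "I1 = {-C..C}"
  define K1 where "K1 = {0..nat C}"
  define I2 where "I2 = {-4*C..4*C}"
  define K2 where "K2 = {0..nat (4*C)}"
  have fins: "finite I1" "finite K1" "finite I2" "finite K2"
    by (auto simp: I1_def I2_def K1_def K2_def)
  define F4 where "F4 = assoc_left_term P Q R j"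
  define F5 where "F5 = assoc_right_term P Q R j"
  have "sum F5 (I1 \<times> K1 \<times> I2 \<times> K2 \<times> K1) = sum F4 (I1 \<times> K1 \<times> I2 \<times> K2)"
  proof (rule sum_regroup_assoc)
    show "finite (I1 \<times> K1 \<times> I2 \<times> K2 \<times> K1)" "finite (I1 \<times> K1 \<times> I2 \<times> K2)" using fins by auto
    show "u \<le> t" if "F5 (m,t,n,s,u) \<noteq> 0" for m t n s u
      using that by (auto simp: F5_def assoc_right_term_def split: if_splits)
    show "x \<in> I1 \<times> K1 \<times> I2 \<times> K2 \<times> K1" if "F5 x \<noteq> 0" for x
    proof -
      obtain m t n s u where x: "x = (m,t,n,s,u)" by (cases x) auto
      have nz: "u \<le> t" "P m \<noteq> 0" "Q n \<noteq> 0" "R (j + int t - m + int s - n) \<noteq> 0"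
        using that by (auto simp: F5_def assoc_right_term_def x split: if_splits)
      have "m \<le> NP" by (metis P deg_le_zero not_le nz(2))
      moreover have "n \<le> NQ" by (metis Q deg_le_zero not_le nz(3))
      moreover have "j + int t - m + int s - n \<le> NR" by (metis R deg_le_zero not_le nz(4))
      ultimately show ?thesis using nz(1) abs_bounds
        by (auto simp: x I1_def K1_def I2_def K2_def C_def le_nat_iff)
    qed
    show "y \<in> I1 \<times> K1 \<times> I2 \<times> K2" if "F4 y \<noteq> 0" for y
    proof -
      obtain l k2 m k1 where y: "y = (l,k2,m,k1)" by (cases y) auto
      have nz: "P m \<noteq> 0" "Q (l + int k1 - m) \<noteq> 0" "R (j + int k2 - l) \<noteq> 0"
        using that by (auto simp: F4_def assoc_left_term_def y)
      have "m \<le> NP" by (metis P deg_le_zero not_le nz(1))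
      moreover have "l + int k1 - m \<le> NQ" by (metis Q deg_le_zero not_le nz(2))
      moreover have "j + int k2 - l \<le> NR" by (metis R deg_le_zero not_le nz(3))
      ultimately show ?thesis using abs_bounds
        by (auto simp: y I1_def K1_def I2_def K2_def C_def le_nat_iff)
    qed
    show "(\<Sum>v\<le>k2. F5 (m, k1+v, l + int k1 - m, k2 - v, k1)) = F4 (l,k2,m,k1)" for l k2 m k1
      unfolding F4_def F5_def by (rule assoc_right_term_fibre)
  qed
  thus ?thesis
    using pmult_pmult_left_eq_sum[OF P Q R C_def] pmult_pmult_right_eq_sum[OF P Q R C_def]
    by (simp add: F4_def F5_def I1_def K1_def I2_def K2_def)
qed

lemma deg_le_add: "deg_le P N \<Longrightarrow> deg_le Q N \<Longrightarrow> deg_le (\<lambda>j. P j + Q j) N"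
  by (simp add: deg_le_def)

lemma deg_le_diff: "deg_le P N \<Longrightarrow> deg_le Q N \<Longrightarrow> deg_le (\<lambda>j. P j - Q j) N"
  by (simp add: deg_le_def)

lemma deg_le_smult: "deg_le P N \<Longrightarrow> deg_le (\<lambda>j. a * P j) N"
  by (simp add: deg_le_def)

lemma pdo_add[simp]: "is_pdo (P::'a pdo) \<Longrightarrow> is_pdo Q \<Longrightarrow> is_pdo (\<lambda>j. P j + Q j)"
  using is_pdo_common_deg_le[of P Q] deg_le_add is_pdo_iff_deg_le by blast

lemma pdo_diff[simp]: "is_pdo (P::'a pdo) \<Longrightarrow> is_pdo Q \<Longrightarrow> is_pdo (\<lambda>j. P j - Q j)"
  using is_pdo_common_deg_le[of P Q] deg_le_diff is_pdo_iff_deg_le by blast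

lemma pdo_smult[simp]: "is_pdo (P::'a pdo) \<Longrightarrow> is_pdo (\<lambda>j. a * P j)"
  using deg_le_smult is_pdo_iff_deg_le by blast

lemma pdo_uminus[simp]: "is_pdo (P::'a pdo) \<Longrightarrow> is_pdo (\<lambda>j. - P j)"
  using pdo_smult[of P "-1"] by simp

lemma pdo_zero[simp]: "is_pdo (\<lambda>_. 0::'a)"
  by (simp add: is_pdo_def)

lemma pdo_sum[simp]: "(\<And>i. i \<in> S \<Longrightarrow> is_pdo (f i :: 'a pdo)) \<Longrightarrow> is_pdo (\<lambda>j. \<Sum>i\<in>S. f i j)"
  by (induction S rule: infinite_finite_induct) auto

lemma pdo_pm[simp]: "is_pdo P \<Longrightarrow> is_pdo Q \<Longrightarrow> is_pdo (pm P Q)"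
  using deg_le_pmult is_pdo_iff_deg_le by blast

lemma pm_assoc:
  assumes "is_pdo P" "is_pdo Q" "is_pdo R"
  shows "pm (pm P Q) R = pm P (pm Q R)"
proof -
  obtain NP NQ NR where "deg_le P NP" "deg_le Q NQ" "deg_le R NR"
    using assms is_pdo_iff_deg_le by blast
  thus ?thesis using pmult_assoc by blast
qed

lemma pm_add_left:
  assumes "is_pdo P" "is_pdo Q" "is_pdo R"
  shows "pm (\<lambda>j. P j + Q j) R = (\<lambda>j. pm P R j + pm Q R j)"
proof
  fix j
  obtain N M where b: "deg_le P N" "deg_le Q N" "deg_le R M"
    using assms is_pdo_common_deg_le is_pdo_iff_deg_le by metis
  show "pm (\<lambda>j. P j + Q j) R j = pm P R j + pm Q R j"
    using pmult_box[OF deg_le_add[OF b(1,2)] b(3), of "{j - M..N}" "{0..nat (N + M - j)}" j]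
      pmult_box[OF b(1,3), of "{j - M..N}" "{0..nat (N + M - j)}" j]
      pmult_box[OF b(2,3), of "{j - M..N}" "{0..nat (N + M - j)}" j]
    by (simp add: distrib_left distrib_right sum.distrib)
qed

lemma pm_add_right:
  assumes "is_pdo P" "is_pdo Q" "is_pdo R"
  shows "pm P (\<lambda>j. Q j + R j) = (\<lambda>j. pm P Q j + pm P R j)"
proof
  fix j
  obtain N M where b: "deg_le P N" "deg_le Q M" "deg_le R M"
    using assms is_pdo_common_deg_le is_pdo_iff_deg_le by metis
  show "pm P (\<lambda>j. Q j + R j) j = pm P Q j + pm P R j"
    using pmult_box[OF b(1) deg_le_add[OF b(2,3)], of "{j - M..N}" "{0..nat (N + M - j)}" j]
      pmult_box[OF b(1,2), of "{j - M..N}" "{0..nat (N + M - j)}" j]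
      pmult_box[OF b(1,3), of "{j - M..N}" "{0..nat (N + M - j)}" j]
    by (simp add: distrib_left distrib_right sum.distrib dk_add)
qed

lemma pm_smult_left:
  assumes "is_pdo P" "is_pdo R"
  shows "pm (\<lambda>j. a * P j) R = (\<lambda>j. a * pm P R j)"
proof
  fix j
  obtain N M where b: "deg_le P N" "deg_le R M" using assms is_pdo_iff_deg_le by blast
  show "pm (\<lambda>j. a * P j) R j = a * pm P R j"
    using pmult_box[OF deg_le_smult[OF b(1)] b(2), of "{j - M..N}" "{0..nat (N + M - j)}" j]
      pmult_box[OF b, of "{j - M..N}" "{0..nat (N + M - j)}" j]
    by (simp add: sum_distrib_left mult_ac)
qed

lemma pm_smult_right:
  assumes "is_pdo P" "is_pdo R" "der c = 0"
  shows "pm P (\<lambda>j. c * R j) = (\<lambda>j. c * pm P R j)"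
proof
  fix j
  obtain N M where b: "deg_le P N" "deg_le R M" using assms is_pdo_iff_deg_le by blast
  show "pm P (\<lambda>j. c * R j) j = c * pm P R j"
    using pmult_box[OF b(1) deg_le_smult[OF b(2)], of "{j - M..N}" "{0..nat (N + M - j)}" j]
      pmult_box[OF b, of "{j - M..N}" "{0..nat (N + M - j)}" j]
    by (simp add: sum_distrib_left mult_ac dk_const_mult[OF assms(3)])
qed

lemma pm_zero_left[simp]: "pm (\<lambda>_. 0) R = (\<lambda>_. 0)"
  by (rule ext) (simp add: pmult_def)

lemma pm_zero_right[simp]: "pm P (\<lambda>_. 0) = (\<lambda>_. 0)"
  by (rule ext) (simp add: pmult_def)

lemma pm_diff_left:
  assumes "is_pdo P" "is_pdo Q" "is_pdo R"
  shows "pm (\<lambda>j. P j - Q j) R = (\<lambda>j. pm P R j - pm Q R j)"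
  using pm_add_left[of P "\<lambda>j. -1 * Q j" R] pm_smult_left[of Q R "-1"] assms
  by (simp add: fun_eq_iff)

lemma pm_diff_right:
  assumes "is_pdo P" "is_pdo Q" "is_pdo R"
  shows "pm P (\<lambda>j. Q j - R j) = (\<lambda>j. pm P Q j - pm P R j)"
  using pm_add_right[of P Q "\<lambda>j. -1 * R j"] pm_smult_right[of P R "-1"] assms
  by (simp add: fun_eq_iff)

lemma pm_sum_left:
  "(\<And>i. i \<in> S \<Longrightarrow> is_pdo (f i)) \<Longrightarrow> is_pdo R \<Longrightarrow>
    pm (\<lambda>j. \<Sum>i\<in>S. f i j) R = (\<lambda>j. \<Sum>i\<in>S. pm (f i) R j)"
proof (induction S rule: infinite_finite_induct)
  case (insert x F)
  then show ?case using pm_add_left[of "f x" "\<lambda>j. \<Sum>i\<in>F. f i j" R] by simp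
qed auto

lemma pm_sum_right:
  "(\<And>i. i \<in> S \<Longrightarrow> is_pdo (f i)) \<Longrightarrow> is_pdo P \<Longrightarrow>
    pm P (\<lambda>j. \<Sum>i\<in>S. f i j) = (\<lambda>j. \<Sum>i\<in>S. pm P (f i) j)"
proof (induction S rule: infinite_finite_induct)
  case (insert x F)
  then show ?case using pm_add_right[of P "f x" "\<lambda>j. \<Sum>i\<in>F. f i j"] by simp
qed auto

definition cst :: "'a \<Rightarrow> 'a pdo" where "cst a = (\<lambda>j. if j = 0 then a else 0)"
definition Dop :: "'a pdo" where "Dop = (\<lambda>j. if j = 1 then 1 else 0)"
definition Dinv :: "'a pdo" where "Dinv = (\<lambda>j. if j = -1 then 1 else 0)"
definition monom_op :: "'a \<Rightarrow> int \<Rightarrow> 'a pdo" where "monom_op a k = (\<lambda>j. if j = k then a else 0)"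

lemma deg_le_cst: "deg_le (cst a) 0"
  by (simp add: deg_le_def cst_def)

lemma pdo_single_coeff[simp]: "is_pdo (\<lambda>j. if j = n then c else 0)"
  unfolding is_pdo_def by (rule exI[of _ n]) simp

lemma pdo_cst[simp]: "is_pdo (cst a)"
  by (simp add: cst_def)

lemma pdo_Dop[simp]: "is_pdo Dop"
  by (simp add: Dop_def)

lemma pdo_Dinv[simp]: "is_pdo Dinv"
  by (simp add: Dinv_def)

lemma pm_cst_left:
  assumes "is_pdo X"
  shows "pm (cst a) X = (\<lambda>j. a * X j)"
proof
  fix j
  have "pm (cst a) X j = (\<Sum>m\<in>{0}. \<Sum>k\<in>{0}. (of_int m gchoose k) * cst a m * dk k (X (j + int k - m)))"
    by (rule pmult_eq_double_sum) (auto simp: assms cst_def split: if_splits)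
  thus "pm (cst a) X j = a * X j" by (simp add: cst_def)
qed

lemma pm_monom_op_right:
  assumes "is_pdo X" "der c = 0"
  shows "pm X (monom_op c n) = (\<lambda>j. X (j - n) * c)"
proof
  fix j
  have "pm X (monom_op c n) j
      = (\<Sum>m\<in>{j - n}. \<Sum>k\<in>{0}. (of_int m gchoose k) * X m * dk k (monom_op c n (j + int k - m)))"
    by (rule pmult_eq_double_sum)
      (auto simp: assms dk_const[OF assms(2)] monom_op_def split: if_splits)
  thus "pm X (monom_op c n) j = X (j - n) * c" by (simp add: monom_op_def)
qed

lemma pm_cst_right_const: "is_pdo X \<Longrightarrow> der c = 0 \<Longrightarrow> pm X (cst c) = (\<lambda>j. X j * c)"
  using pm_monom_op_right[of X c 0] by (simp add: cst_def monom_op_def)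

lemma pm_one_right[simp]: "is_pdo X \<Longrightarrow> pm X (cst 1) = X"
  using pm_cst_right_const[of X 1] by simp

lemma pm_one_left[simp]: "is_pdo X \<Longrightarrow> pm (cst 1) X = X"
  using pm_cst_left[of X 1] by simp

lemma pm_Dop_right: "is_pdo X \<Longrightarrow> pm X Dop = (\<lambda>j. X (j - 1))"
  using pm_monom_op_right[of X 1 1] by (simp add: Dop_def monom_op_def)

lemma pm_Dop_left:
  assumes "is_pdo X"
  shows "pm Dop X = (\<lambda>j. X (j - 1) + der (X j))"
proof
  fix j
  have "pm Dop X j = (\<Sum>m\<in>{1}. \<Sum>k\<in>{0,1}. (of_int m gchoose k) * Dop m * dk k (X (j + int k - m)))"
    by (rule pmult_eq_double_sum) (auto simp: assms Dop_def split: if_splits)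
  thus "pm Dop X j = X (j - 1) + der (X j)" by (simp add: Dop_def)
qed

lemma pm_Dinv_left:
  assumes "is_pdo X" "deg_le X N"
  shows "pm Dinv X j = (\<Sum>k\<in>{0..nat (N - j)}. (-1)^k * dk k (X (j + int k + 1)))"
proof -
  have "pm Dinv X j = (\<Sum>m\<in>{-1}. \<Sum>k\<in>{0..nat (N - j)}. (of_int m gchoose k) * Dinv m * dk k (X (j + int k - m)))"
  proof (rule pmult_eq_double_sum)
    fix m k assume nz: "(of_int m gchoose k) * Dinv m * dk k (X (j + int k - m)) \<noteq> 0"
    hence "m = -1" by (auto simp: Dinv_def split: if_splits)
    moreover have "j + int k - m \<le> N" using nz deg_le_zero[OF assms(2)] by (metis dk_0 mult_zero_right not_le)
    ultimately show "m \<in> {-1} \<and> k \<in> {0..nat (N - j)}" by auto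
  qed (auto simp: assms)
  thus ?thesis by (simp add: Dinv_def gbinomial_minus_1_left)
qed

lemma pm_Dop_Dinv: "pm Dop Dinv = cst 1"
  unfolding pm_Dop_left[OF pdo_Dinv] by (auto simp: Dinv_def cst_def fun_eq_iff)

lemma pm_Dinv_Dop: "pm Dinv Dop = cst 1"
  unfolding pm_Dop_right[OF pdo_Dinv] by (auto simp: Dinv_def cst_def fun_eq_iff)

lemma pm_cst_cst: "pm (cst a) (cst b) = cst (a * b)"
  unfolding pm_cst_left[OF pdo_cst] by (auto simp: cst_def fun_eq_iff)

lemma pm_Dinv_cst:
  "pm Dinv (cst q) j = (if j < 0 then (-1) ^ nat (- j - 1) * dk (nat (- j - 1)) q else 0)"
proof (cases "j < 0")
  case True
  have "pm Dinv (cst q) j = (\<Sum>m\<in>{-1}. \<Sum>k\<in>{nat (- j - 1)}. (of_int m gchoose k) * Dinv m * dk k (cst q (j + int k - m)))"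
    by (rule pmult_eq_double_sum) (use True in \<open>auto simp: Dinv_def cst_def split: if_splits\<close>)
  then show ?thesis using True by (simp add: Dinv_def cst_def gbinomial_minus_1_left)
next
  case False
  have "pm Dinv (cst q) j = (\<Sum>m\<in>{}. \<Sum>k\<in>{}. (of_int m gchoose k) * Dinv m * dk k (cst q (j + int k - m)))"
    by (rule pmult_eq_double_sum) (use False in \<open>auto simp: Dinv_def cst_def split: if_splits\<close>)
  then show ?thesis using False by simp
qed

lemma pm_Dop_Dinv_cancel: "is_pdo Z \<Longrightarrow> pm Dop (pm Dinv Z) = Z"
  using pm_assoc[of Dop Dinv Z] by (simp add: pm_Dop_Dinv)

lemma pm_Dinv_Dop_cancel: "is_pdo Z \<Longrightarrow> pm Dinv (pm Dop Z) = Z"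
  using pm_assoc[of Dinv Dop Z] by (simp add: pm_Dinv_Dop)

lemma pm_Dop_cst: "pm Dop (cst R) = (\<lambda>j. pm (cst R) Dop j + cst (der R) j)"
  unfolding pm_Dop_left[OF pdo_cst] pm_cst_left[OF pdo_Dop] by (auto simp: fun_eq_iff cst_def Dop_def)

definition pDinvq :: "'a \<Rightarrow> 'a \<Rightarrow> 'a pdo" where
  "pDinvq p q = pm (cst p) (pm Dinv (cst q))"

lemma pdo_pDinvq[simp]: "is_pdo (pDinvq p q)"
  by (simp add: pDinvq_def)

lemma pDinvq_eq: "pDinvq p q = (\<lambda>j. if j < 0 then p * (-1) ^ nat (- j - 1) * dk (nat (- j - 1)) q else 0)"
  by (simp add: pDinvq_def pm_cst_left pm_Dinv_cst fun_eq_iff)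

section \<open>Differential operators and their action\<close>

lemma diffop_pdo: "is_diffop P \<Longrightarrow> is_pdo P"
  by (simp add: is_diffop_def)

lemma diffop_neg: "is_diffop P \<Longrightarrow> n < 0 \<Longrightarrow> P n = 0"
  by (simp add: is_diffop_def)

lemma diffop_cst[simp]: "is_diffop (cst a)"
  by (simp add: is_diffop_def cst_def)

lemma diffop_Dop[simp]: "is_diffop Dop"
  by (simp add: is_diffop_def Dop_def)

lemma diffop_monom_op[simp]: "k \<ge> 0 \<Longrightarrow> is_diffop (monom_op a k)"
  by (simp add: is_diffop_def monom_op_def)

lemma diffop_zero[simp]: "is_diffop (\<lambda>_. 0::'a)"
  by (simp add: is_diffop_def)

lemma diffop_add[simp]: "is_diffop (P::'a pdo) \<Longrightarrow> is_diffop Q \<Longrightarrow> is_diffop (\<lambda>j. P j + Q j)"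
  by (simp add: is_diffop_def)

lemma diffop_diff[simp]: "is_diffop (P::'a pdo) \<Longrightarrow> is_diffop Q \<Longrightarrow> is_diffop (\<lambda>j. P j - Q j)"
  by (simp add: is_diffop_def)

lemma diffop_smult[simp]: "is_diffop (P::'a pdo) \<Longrightarrow> is_diffop (\<lambda>j. a * P j)"
  by (simp add: is_diffop_def)

lemma diffop_sum[simp]: "(\<And>i. i \<in> S \<Longrightarrow> is_diffop (f i :: 'a pdo)) \<Longrightarrow> is_diffop (\<lambda>j. \<Sum>i\<in>S. f i j)"
  by (simp add: is_diffop_def)

lemma diffop_pm[simp]:
  assumes "is_diffop P" "is_diffop Q"
  shows "is_diffop (pm P Q)"
  unfolding is_diffop_def
proof (intro conjI allI impI)
  show "is_pdo (pm P Q)" using assms by (simp add: diffop_pdo)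
  fix j :: int assume j: "j < 0"
  have "pm P Q j = (\<Sum>m\<in>{}. \<Sum>k\<in>{}. (of_int m gchoose k) * P m * dk k (Q (j + int k - m)))"
  proof (rule pmult_eq_double_sum)
    fix m k assume nz: "(of_int m gchoose k) * P m * dk k (Q (j + int k - m)) \<noteq> 0"
    have "m \<ge> 0" using nz assms(1) diffop_neg by (metis mult_zero_left mult_zero_right not_le)
    moreover have "j + int k - m \<ge> 0" using nz assms(2) diffop_neg by (metis dk_0 mult_zero_right not_le)
    ultimately have "(of_int m gchoose k :: 'a) = 0" using j by (intro gbinomial_of_int_large) auto
    thus "m \<in> {} \<and> k \<in> {}" using nz by simp
  qed (use assms in \<open>auto simp: diffop_pdo\<close>)
  thus "pm P Q j = 0" by simp
qed

lemma apply_op_eq_sum: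
  assumes "finite S" "{n. X n \<noteq> 0} \<subseteq> S"
  shows "apply_op der X f = (\<Sum>n\<in>S. X n * dk (nat n) f)"
  unfolding apply_op_def by (rule sum.mono_neutral_left) (use assms in auto)

lemma diffop_support: "is_diffop X \<Longrightarrow> deg_le X N \<Longrightarrow> {n. X n \<noteq> 0} \<subseteq> {0..N}"
  by (auto simp: is_diffop_def deg_le_def) (meson not_le)+

lemma apply_op_deg_le: "is_diffop X \<Longrightarrow> deg_le X N \<Longrightarrow> apply_op der X f = (\<Sum>n\<in>{0..N}. X n * dk (nat n) f)"
  by (rule apply_op_eq_sum) (auto dest: diffop_support)

lemma apply_op_eq_pm:
  assumes X: "is_diffop X"
  shows "apply_op der X f = pm X (cst f) 0"
proof -
  obtain N where N: "deg_le X N" using X is_diffop_def is_pdo_iff_deg_le by blast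
  have "pm X (cst f) 0 = (\<Sum>m\<in>{0..N}. \<Sum>k\<in>{0..nat N}. (of_int m gchoose k) * X m * dk k (cst f (0 + int k - m)))"
  proof (rule pmult_eq_double_sum)
    fix m k assume nz: "(of_int m gchoose k) * X m * dk k (cst f (0 + int k - m)) \<noteq> 0"
    hence "X m \<noteq> 0" "int k = m" by (auto simp: cst_def split: if_splits)
    thus "m \<in> {0..N} \<and> k \<in> {0..nat N}" using diffop_support[OF X N] by auto
  qed (use X in \<open>auto simp: diffop_pdo\<close>)
  also have "\<dots> = (\<Sum>m\<in>{0..N}. X m * dk (nat m) f)"
  proof (rule sum.cong[OF refl])
    fix m assume m: "m \<in> {0..N}"
    have "(\<Sum>k\<in>{0..nat N}. (of_int m gchoose k) * X m * dk k (cst f (0 + int k - m)))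
        = (\<Sum>k\<in>{0..nat N}. if k = nat m then (of_int m gchoose k) * X m * dk k f else 0)"
      by (rule sum.cong[OF refl]) (use m in \<open>auto simp: cst_def\<close>)
    also have "\<dots> = X m * dk (nat m) f" using m by (simp add: gbinomial_of_int_self nat_mono)
    finally show "(\<Sum>k\<in>{0..nat N}. (of_int m gchoose k) * X m * dk k (cst f (0 + int k - m))) = X m * dk (nat m) f" .
  qed
  finally show ?thesis using apply_op_deg_le[OF X N] by simp
qed

lemma pm_at_0_eq_0:
  assumes P: "is_diffop P" and V: "is_pdo V" "\<And>n. n \<le> 0 \<Longrightarrow> V n = 0"
  shows "pm P V 0 = 0"
proof -
  have "pm P V 0 = (\<Sum>m\<in>{}. \<Sum>k\<in>{}. (of_int m gchoose k) * P m * dk k (V (0 + int k - m)))"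
  proof (rule pmult_eq_double_sum)
    fix m k assume nz: "(of_int m gchoose k) * P m * dk k (V (0 + int k - m)) \<noteq> 0"
    have "m \<ge> 0" using nz P diffop_neg by (metis mult_zero_left mult_zero_right not_le)
    moreover have "0 + int k - m > 0" using nz V(2) by (metis dk_0 mult_zero_right not_le)
    ultimately have "(of_int m gchoose k :: 'a) = 0" by (intro gbinomial_of_int_large) auto
    thus "m \<in> {} \<and> k \<in> {}" using nz by simp
  qed (use assms in \<open>auto simp: diffop_pdo\<close>)
  thus ?thesis by simp
qed

lemma apply_op_pm:
  assumes P: "is_diffop P" and Q: "is_diffop Q"
  shows "apply_op der (pm P Q) f = apply_op der P (apply_op der Q f)"
proof -
  define W where "W = pm Q (cst f)"
  have W: "is_diffop W" using Q by (simp add: W_def)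
  have "apply_op der (pm P Q) f = pm (pm P Q) (cst f) 0" using P Q by (simp add: apply_op_eq_pm)
  also have "pm (pm P Q) (cst f) = pm P W" unfolding W_def using P Q by (simp add: pm_assoc diffop_pdo)
  also have "\<dots> = pm P (\<lambda>j. (W j - cst (W 0) j) + cst (W 0) j)" by simp
  also have "\<dots> = (\<lambda>j. pm P (\<lambda>j. W j - cst (W 0) j) j + pm P (cst (W 0)) j)"
    using P W by (intro pm_add_right) (auto simp: diffop_pdo)
  also have "pm P (\<lambda>j. W j - cst (W 0) j) 0 = 0"
    by (rule pm_at_0_eq_0[OF P]) (use W in \<open>auto simp: diffop_pdo cst_def is_diffop_def\<close>)
  finally show ?thesis using P Q W by (simp add: apply_op_eq_pm W_def)
qed

lemma apply_op_add: "apply_op der X (a + b) = apply_op der X a + apply_op der X b"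
  by (simp add: apply_op_def dk_add distrib_left sum.distrib)

lemma apply_op_const_mult: "der c = 0 \<Longrightarrow> apply_op der X (c * a) = c * apply_op der X a"
  by (simp add: apply_op_def dk_const_mult sum_distrib_left mult.left_commute)

lemma apply_op_zero[simp]: "apply_op der X 0 = 0"
  by (simp add: apply_op_def)

lemma apply_op_sum: "apply_op der X (\<Sum>i\<in>S. f i) = (\<Sum>i\<in>S. apply_op der X (f i))"
  by (induction S rule: infinite_finite_induct) (auto simp: apply_op_add)

lemma apply_op_lin_comb:
  "(\<And>i. i \<in> S \<Longrightarrow> der (c i) = 0) \<Longrightarrow> apply_op der X (\<Sum>i\<in>S. c i * f i) = (\<Sum>i\<in>S. c i * apply_op der X (f i))"
  by (simp add: apply_op_sum apply_op_const_mult)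

lemma apply_op_cst[simp]: "apply_op der (cst r) f = r * f"
proof -
  have "apply_op der (cst r) f = (\<Sum>n\<in>{0}. cst r n * dk (nat n) f)"
    by (rule apply_op_eq_sum) (auto simp: cst_def)
  thus ?thesis by (simp add: cst_def)
qed

lemma apply_op_add_op:
  assumes "is_diffop X" "is_diffop Y"
  shows "apply_op der (\<lambda>j. X j + Y j) f = apply_op der X f + apply_op der Y f"
proof -
  obtain N where N: "deg_le X N" "deg_le Y N" using assms is_pdo_common_deg_le diffop_pdo by blast
  have XY: "deg_le (\<lambda>j. X j + Y j) N" using N deg_le_add by blast
  show ?thesis using apply_op_deg_le[OF assms(1) N(1)] apply_op_deg_le[OF assms(2) N(2)]
      apply_op_deg_le[OF diffop_add[OF assms] XY]
    by (simp add: distrib_right sum.distrib)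
qed

lemma apply_op_diff_op:
  assumes "is_diffop X" "is_diffop Y"
  shows "apply_op der (\<lambda>j. X j - Y j) f = apply_op der X f - apply_op der Y f"
proof -
  obtain N where N: "deg_le X N" "deg_le Y N" using assms is_pdo_common_deg_le diffop_pdo by blast
  have XY: "deg_le (\<lambda>j. X j - Y j) N" using N deg_le_diff by blast
  show ?thesis using apply_op_deg_le[OF assms(1) N(1)] apply_op_deg_le[OF assms(2) N(2)]
      apply_op_deg_le[OF diffop_diff[OF assms] XY]
    by (simp add: left_diff_distrib sum_subtractf)
qed

lemma apply_op_Dop[simp]: "apply_op der Dop f = der f"
proof -
  have "apply_op der Dop f = (\<Sum>n\<in>{1}. Dop n * dk (nat n) f)"
    by (rule apply_op_eq_sum) (auto simp: Dop_def)
  thus ?thesis by (simp add: Dop_def)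
qed


section \<open>Division by \<open>\<partial>\<close>, leading terms and order\<close>

text \<open>For a differential operator \<open>X\<close>, \<open>X = \<partial> (ldiv_quot X) + ldiv_rem X\<close> with \<open>ldiv_quot X\<close>
  differential: \<open>ldiv_rem X\<close> is the coefficient of \<open>\<partial>\<^sup>-\<^sup>1\<close> in \<open>\<partial>\<^sup>-\<^sup>1 X\<close>.\<close>

definition ldiv_rem :: "'a pdo \<Rightarrow> 'a" where "ldiv_rem X = pm Dinv X (-1)"

definition ldiv_quot :: "'a pdo \<Rightarrow> 'a pdo" where "ldiv_quot X = pm Dinv (\<lambda>j. X j - cst (ldiv_rem X) j)"

lemma ldiv_rem_cst[simp]: "ldiv_rem (cst c) = c"
  by (simp add: ldiv_rem_def pm_Dinv_cst)

lemma ldiv_rem_add: "is_pdo X \<Longrightarrow> is_pdo Y \<Longrightarrow> ldiv_rem (\<lambda>j. X j + Y j) = ldiv_rem X + ldiv_rem Y"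
  by (simp add: ldiv_rem_def pm_add_right)

lemma ldiv_rem_diff: "is_pdo X \<Longrightarrow> is_pdo Y \<Longrightarrow> ldiv_rem (\<lambda>j. X j - Y j) = ldiv_rem X - ldiv_rem Y"
  by (simp add: ldiv_rem_def pm_diff_right)

lemma ldiv_rem_pm_Dop: "is_diffop Y \<Longrightarrow> ldiv_rem (pm Dop Y) = 0"
  by (simp add: ldiv_rem_def pm_Dinv_Dop_cancel diffop_pdo diffop_neg)

lemma pm_Dinv_pred:
  assumes "is_diffop Z" "j < 0"
  shows "pm Dinv Z (j - 1) = - der (pm Dinv Z j)"
proof -
  have "pm Dop (pm Dinv Z) j = Z j" using assms by (simp add: pm_Dop_Dinv_cancel diffop_pdo)
  also have "\<dots> = 0" using assms diffop_neg by blast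
  finally show ?thesis using assms by (simp add: pm_Dop_left diffop_pdo eq_neg_iff_add_eq_0)
qed

lemma diffop_pm_Dinv:
  assumes Z: "is_diffop Z" and c: "ldiv_rem Z = 0"
  shows "is_diffop (pm Dinv Z)"
proof -
  have a: "pm Dinv Z (- 1 - int n) = 0" for n
  proof (induction n)
    case 0 then show ?case using c by (simp add: ldiv_rem_def)
  next
    case (Suc n)
    have "pm Dinv Z (- 1 - int n - 1) = - der (pm Dinv Z (- 1 - int n))"
      by (rule pm_Dinv_pred[OF Z]) simp
    then show ?case using Suc by (simp add: algebra_simps)
  qed
  have "pm Dinv Z j = 0" if "j < 0" for j
    using a[of "nat (- j - 1)"] that by simp
  thus ?thesis using Z by (simp add: is_diffop_def diffop_pdo)
qed

lemma ldiv_quot_rem: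
  assumes X: "is_diffop X"
  shows "is_diffop (ldiv_quot X)" "X = (\<lambda>j. pm Dop (ldiv_quot X) j + cst (ldiv_rem X) j)"
proof -
  have Z: "is_diffop (\<lambda>j. X j - cst (ldiv_rem X) j)" using X by simp
  have "ldiv_rem (\<lambda>j. X j - cst (ldiv_rem X) j) = 0" using X by (simp add: ldiv_rem_diff diffop_pdo)
  thus "is_diffop (ldiv_quot X)" unfolding ldiv_quot_def by (rule diffop_pm_Dinv[OF Z])
  have "pm Dop (ldiv_quot X) = (\<lambda>j. X j - cst (ldiv_rem X) j)" unfolding ldiv_quot_def
    by (rule pm_Dop_Dinv_cancel) (use Z in \<open>simp add: diffop_pdo\<close>)
  thus "X = (\<lambda>j. pm Dop (ldiv_quot X) j + cst (ldiv_rem X) j)" by simp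
qed

lemma ldiv_rem_eq_0_iff:
  assumes X: "is_diffop X"
  shows "ldiv_rem X = 0 \<longleftrightarrow> (\<exists>Y. is_diffop Y \<and> X = pm Dop Y)"
proof
  assume "ldiv_rem X = 0"
  hence "X = pm Dop (ldiv_quot X)" using ldiv_quot_rem[OF X] by (simp add: cst_def)
  thus "\<exists>Y. is_diffop Y \<and> X = pm Dop Y" using ldiv_quot_rem(1)[OF X] by blast
next
  assume "\<exists>Y. is_diffop Y \<and> X = pm Dop Y"
  thus "ldiv_rem X = 0" using ldiv_rem_pm_Dop by blast
qed

lemma ldiv_rem_cst_mult:
  assumes B: "is_diffop B" "deg_le B N"
  shows "ldiv_rem (pm (cst q) B) = (\<Sum>k\<in>{0..nat (N + 1)}. (-1)^k * dk k (q * B (int k)))"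
proof -
  have "pm (cst q) B = (\<lambda>j. q * B j)" using B by (simp add: pm_cst_left diffop_pdo)
  moreover have "deg_le (\<lambda>j. q * B j) N" using B deg_le_smult by blast
  ultimately show ?thesis
    unfolding ldiv_rem_def using pm_Dinv_left[of "\<lambda>j. q * B j" N "-1"] B
    by (simp add: diffop_pdo)
qed

lemma exists_leading:
  assumes "is_pdo (X::'a pdo)" "X \<noteq> (\<lambda>_. 0)"
  shows "\<exists>t. X t \<noteq> 0 \<and> (\<forall>m>t. X m = 0)"
proof -
  obtain N where N: "deg_le X N" using assms is_pdo_iff_deg_le by blast
  obtain n0 where n0: "X n0 \<noteq> 0" using assms by auto
  define S where "S = {n \<in> {n0..N}. X n \<noteq> 0}"
  have "n0 \<le> N" using n0 N deg_le_zero not_le by blast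
  hence n0S: "n0 \<in> S" using n0 by (simp add: S_def)
  have fS: "finite S" unfolding S_def by (rule finite_subset[of _ "{n0..N}"]) auto
  define t where "t = Max S"
  have tS: "t \<in> S" unfolding t_def using fS n0S by (intro Max_in) auto
  have "X m = 0" if "m > t" for m
  proof (rule ccontr)
    assume nz: "X m \<noteq> 0"
    have "m \<le> N" using nz N deg_le_zero not_le by blast
    moreover have "n0 \<le> m" using tS that by (auto simp: S_def)
    ultimately have "m \<in> S" using nz by (auto simp: S_def)
    hence "m \<le> t" using fS by (simp add: t_def)
    thus False using that by simp
  qed
  thus ?thesis using tS by (auto simp: S_def)
qed

lemma pm_leading:
  assumes P: "is_pdo P" "\<And>m. m > a \<Longrightarrow> P m = 0" and Q: "is_pdo Q" "\<And>m. m > b \<Longrightarrow> Q m = 0"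
  shows "pm P Q (a + b) = P a * Q b" "\<And>m. m > a + b \<Longrightarrow> pm P Q m = 0"
proof -
  have "pm P Q (a + b) = (\<Sum>m\<in>{a}. \<Sum>k\<in>{0}. (of_int m gchoose k) * P m * dk k (Q (a + b + int k - m)))"
  proof (rule pmult_eq_double_sum)
    fix m k assume nz: "(of_int m gchoose k) * P m * dk k (Q (a + b + int k - m)) \<noteq> 0"
    have "m \<le> a" using nz P(2) by (metis mult_zero_left mult_zero_right not_le)
    moreover have "a + b + int k - m \<le> b" using nz Q(2) by (metis dk_0 mult_zero_right not_le)
    ultimately show "m \<in> {a} \<and> k \<in> {0}" by auto
  qed (use P Q in auto)
  thus "pm P Q (a + b) = P a * Q b" by simp
  have "deg_le (pm P Q) (a + b)" by (rule deg_le_pmult) (use P Q in \<open>auto simp: deg_le_def\<close>)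
  thus "\<And>m. m > a + b \<Longrightarrow> pm P Q m = 0" by (simp add: deg_le_def)
qed

lemma pm_nonzero:
  assumes "is_pdo P" "is_pdo Q" "P \<noteq> (\<lambda>_. 0)" "Q \<noteq> (\<lambda>_. 0)"
  shows "pm P Q \<noteq> (\<lambda>_. 0)"
proof -
  obtain a where a: "P a \<noteq> 0" "\<forall>m>a. P m = 0" using exists_leading assms by blast
  obtain b where b: "Q b \<noteq> 0" "\<forall>m>b. Q m = 0" using exists_leading assms by blast
  have "pm P Q (a + b) = P a * Q b" using pm_leading(1)[of P a Q b] a b assms by auto
  thus ?thesis using a b by (metis mult_eq_0_iff)
qed

lemma nonzero_op_iff: "(\<exists>n. B n \<noteq> 0) \<longleftrightarrow> B \<noteq> (\<lambda>_. 0)"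
  by auto

lemma dord_leading:
  assumes P: "is_diffop (P::'a pdo)" "P \<noteq> (\<lambda>_. 0)"
  shows "P (int (dord P)) \<noteq> 0" "\<And>m. m > int (dord P) \<Longrightarrow> P m = 0"
proof -
  obtain N where N: "deg_le P N" using P diffop_pdo is_pdo_iff_deg_le by blast
  have sub: "{n. P n \<noteq> 0} \<subseteq> {0..N}" using diffop_support[OF P(1) N] .
  have fin: "finite {n. P n \<noteq> 0}" using sub finite_subset by blast
  have ne: "{n. P n \<noteq> 0} \<noteq> {}" using P(2) by auto
  define t where "t = Max {n. P n \<noteq> 0}"
  have t: "t \<in> {n. P n \<noteq> 0}" unfolding t_def using fin ne by (rule Max_in)
  have t0: "t \<ge> 0" using t sub by auto
  have d: "int (dord P) = t" using t0 by (simp add: dord_def t_def)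
  show "P (int (dord P)) \<noteq> 0" using t d by simp
  show "\<And>m. m > int (dord P) \<Longrightarrow> P m = 0"
  proof (rule ccontr)
    fix m assume "m > int (dord P)" "P m \<noteq> 0"
    hence "m \<le> t" using fin by (simp add: t_def)
    thus False using \<open>m > int (dord P)\<close> d by simp
  qed
qed

lemma dord_eq:
  assumes "is_diffop (P::'a pdo)" "P t \<noteq> 0" "\<And>m. m > t \<Longrightarrow> P m = 0"
  shows "dord P = nat t"
proof -
  have nz: "P \<noteq> (\<lambda>_. 0)" using assms by auto
  have "\<not> int (dord P) < t" using dord_leading(2)[OF assms(1) nz] assms(2) by blast
  moreover have "\<not> t < int (dord P)" using dord_leading(1)[OF assms(1) nz] assms(3) by blast
  ultimately have "int (dord P) = t" by simp
  thus ?thesis by simp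
qed

lemma dord_pm:
  assumes P: "is_diffop P" "P \<noteq> (\<lambda>_. 0)" and Q: "is_diffop Q" "Q \<noteq> (\<lambda>_. 0)"
  shows "dord (pm P Q) = dord P + dord Q" "pm P Q \<noteq> (\<lambda>_. 0)"
proof -
  have t: "pm P Q (int (dord P) + int (dord Q)) = P (dord P) * Q (dord Q)"
    "\<And>m. m > int (dord P) + int (dord Q) \<Longrightarrow> pm P Q m = 0"
    using pm_leading[of P "int (dord P)" Q "int (dord Q)"] dord_leading[OF P] dord_leading[OF Q] P Q
    by (auto simp: diffop_pdo)
  have nz: "pm P Q (int (dord P) + int (dord Q)) \<noteq> 0" using t(1) dord_leading[OF P] dord_leading[OF Q] by simp
  have "dord (pm P Q) = nat (int (dord P) + int (dord Q))"
    by (rule dord_eq) (use P Q nz t(2) in auto)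
  thus "dord (pm P Q) = dord P + dord Q" by simp
  show "pm P Q \<noteq> (\<lambda>_. 0)" using nz by auto
qed

lemma dord_cst: "a \<noteq> 0 \<Longrightarrow> dord (cst a) = 0"
  using dord_eq[of "cst a" 0] diffop_cst[of a] by (simp add: cst_def)

lemma dord_Dop: "dord Dop = 1"
  using dord_eq[of Dop 1] diffop_Dop by (simp add: Dop_def)

lemma Dop_nz: "Dop \<noteq> (\<lambda>_. 0)" by (auto simp: Dop_def fun_eq_iff)

lemma cst_nz: "a \<noteq> 0 \<Longrightarrow> cst a \<noteq> (\<lambda>_. 0)" by (auto simp: cst_def fun_eq_iff)

lemma dord_0_eq_cst:
  assumes B: "is_diffop B" "B \<noteq> (\<lambda>_. 0)" "dord B = 0"
  shows "B = cst (B 0)" "B 0 \<noteq> 0"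
proof -
  show "B 0 \<noteq> 0" using dord_leading(1)[OF B(1,2)] B(3) by simp
  show "B = cst (B 0)"
  proof
    fix j
    show "B j = cst (B 0) j"
    proof (cases "j < 0")
      case True then show ?thesis using diffop_neg[OF B(1) True] by (simp add: cst_def)
    next
      case False then show ?thesis using dord_leading(2)[OF B(1,2), of j] B(3) by (cases "j = 0") (auto simp: cst_def)
    qed
  qed
qed

lemma dord_monom1: "a \<noteq> 0 \<Longrightarrow> dord (monom_op a 1) = 1"
  using dord_eq[of "monom_op a 1" 1] diffop_monom_op[of 1 a] by (simp add: monom_op_def)

lemma ldiv_rem_monom1: "ldiv_rem (monom_op a 1) = - der a"
proof -
  have m: "monom_op a 1 = pm (cst a) Dop" by (simp add: pm_cst_left monom_op_def Dop_def fun_eq_iff)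
  have b: "deg_le Dop 1" by (simp add: deg_le_def Dop_def)
  have "ldiv_rem (pm (cst a) Dop) = (\<Sum>k\<in>{0..nat (1 + 1)}. (-1)^k * dk k (a * Dop (int k)))"
    by (rule ldiv_rem_cst_mult[OF diffop_Dop b])
  also have "{0..nat (1 + 1)} = {0, 1, 2::nat}" by auto
  finally show ?thesis using m by (simp add: Dop_def)
qed


section \<open>The adjoint\<close>

lemma deg_le_adjoint:
  assumes B: "is_diffop B" "deg_le B N"
  shows "deg_le (adjoint der B) N"
  unfolding deg_le_def
proof (intro allI impI)
  fix j assume j: "j > N"
  have e: "{n. B n \<noteq> 0 \<and> j \<le> n} = {}" using j B(2) deg_le_zero by fastforce
  show "adjoint der B j = 0" unfolding adjoint_def e by simp
qed

lemma diffop_adjoint: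
  assumes B: "is_diffop B"
  shows "is_diffop (adjoint der B)"
proof -
  obtain N where "deg_le B N" using B diffop_pdo is_pdo_iff_deg_le by blast
  hence "is_pdo (adjoint der B)" using B deg_le_adjoint is_pdo_iff_deg_le by blast
  thus ?thesis by (simp add: is_diffop_def adjoint_def)
qed

lemma adjoint_leading:
  assumes B: "is_diffop B" "B \<noteq> (\<lambda>_. 0)"
  shows "adjoint der B (int (dord B)) = (-1) ^ dord B * B (int (dord B))"
    "\<And>m. m > int (dord B) \<Longrightarrow> adjoint der B m = 0"
proof -
  define d where "d = int (dord B)"
  have bd: "deg_le B d" using dord_leading(2)[OF B] by (simp add: deg_le_def d_def)
  show "\<And>m. m > int (dord B) \<Longrightarrow> adjoint der B m = 0"
    using deg_le_adjoint[OF B(1) bd] by (simp add: deg_le_def d_def)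
  have le: "B n \<noteq> 0 \<Longrightarrow> n \<le> d" for n using dord_leading(2)[OF B] d_def not_le by blast
  have e: "{n. B n \<noteq> 0 \<and> d \<le> n} = {d}" using dord_leading(1)[OF B] le d_def by force
  have "adjoint der B d = (-1) ^ dord B * B d"
    unfolding adjoint_def e by (simp add: d_def)
  thus "adjoint der B (int (dord B)) = (-1) ^ dord B * B (int (dord B))" by (simp add: d_def)
qed

lemma dord_adj:
  assumes B: "is_diffop B" "B \<noteq> (\<lambda>_. 0)"
  shows "dord (adjoint der B) = dord B" "adjoint der B \<noteq> (\<lambda>_. 0)"
proof -
  have nz: "adjoint der B (int (dord B)) \<noteq> 0" using adjoint_leading(1)[OF B] dord_leading(1)[OF B] by simp
  show "dord (adjoint der B) = dord B"
    using dord_eq[OF diffop_adjoint[OF B(1)] nz adjoint_leading(2)[OF B]] by simp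
  show "adjoint der B \<noteq> (\<lambda>_. 0)" using nz by auto
qed

lemma adjoint_coeff:
  assumes B: "is_diffop B" "deg_le B (int M)"
  shows "adjoint der B (int j)
    = (\<Sum>n\<in>{0..M}. if j \<le> n then (-1)^n * of_nat (n choose j) * dk (n - j) (B (int n)) else 0)"
proof -
  have "adjoint der B (int j) = (\<Sum>n\<in>{n. B n \<noteq> 0 \<and> int j \<le> n}.
       (-1) ^ nat n * of_nat (nat n choose nat (n - int j)) * dk (nat (n - int j)) (B n))"
    by (simp add: adjoint_def)
  also have "\<dots> = (\<Sum>n\<in>{0..int M}. if int j \<le> n then
       (-1) ^ nat n * of_nat (nat n choose nat (n - int j)) * dk (nat (n - int j)) (B n) else 0)"
  proof -
    have "(\<Sum>n\<in>{0..int M}. if int j \<le> n then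
       (-1) ^ nat n * of_nat (nat n choose nat (n - int j)) * dk (nat (n - int j)) (B n) else 0)
      = (\<Sum>n\<in>{n\<in>{0..int M}. int j \<le> n}.
       (-1) ^ nat n * of_nat (nat n choose nat (n - int j)) * dk (nat (n - int j)) (B n))"
      by (rule sum.inter_filter[symmetric]) simp
    also have "\<dots> = (\<Sum>n\<in>{n. B n \<noteq> 0 \<and> int j \<le> n}.
       (-1) ^ nat n * of_nat (nat n choose nat (n - int j)) * dk (nat (n - int j)) (B n))"
    proof (rule sum.mono_neutral_right)
      show "finite {n \<in> {0..int M}. int j \<le> n}" by (rule finite_subset[of _ "{0..int M}"]) auto
      show "{n. B n \<noteq> 0 \<and> int j \<le> n} \<subseteq> {n \<in> {0..int M}. int j \<le> n}"
        using diffop_support[OF B] by auto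
      show "\<forall>i\<in>{n \<in> {0..int M}. int j \<le> n} - {n. B n \<noteq> 0 \<and> int j \<le> n}.
          (-1) ^ nat i * of_nat (nat i choose nat (i - int j)) * dk (nat (i - int j)) (B i) = 0"
        by auto
    qed
    finally show ?thesis by simp
  qed
  also have "\<dots> = (\<Sum>n\<in>{0..M}. if j \<le> n then (-1)^n * of_nat (n choose (n - j)) * dk (n - j) (B (int n)) else 0)"
  proof -
    have e: "j \<le> k \<Longrightarrow> nat (int k - int j) = k - j" for k by auto
    show ?thesis unfolding sum_atLeastAtMost_int_nat by (rule sum.cong[OF refl]) (simp add: e)
  qed
  also have "\<dots> = (\<Sum>n\<in>{0..M}. if j \<le> n then (-1)^n * of_nat (n choose j) * dk (n - j) (B (int n)) else 0)"
    by (rule sum.cong[OF refl]) (auto simp: binomial_symmetric[symmetric])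
  finally show ?thesis .
qed

lemma apply_adjoint:
  assumes B: "is_diffop B" "deg_le B (int M)"
  shows "apply_op der (adjoint der B) q = (\<Sum>k\<in>{0..M}. (-1)^k * dk k (q * B (int k)))"
proof -
  define A where "A = adjoint der B"
  have A: "is_diffop A" "deg_le A (int M)" using diffop_adjoint[OF B(1)] deg_le_adjoint[OF B] by (auto simp: A_def)
  have "apply_op der A q = (\<Sum>j\<in>{0..int M}. A j * dk (nat j) q)" using apply_op_deg_le[OF A] .
  also have "\<dots> = (\<Sum>j\<in>{0..M}. A (int j) * dk j q)" by (simp add: sum_atLeastAtMost_int_nat)
  also have "\<dots> = (\<Sum>j\<in>{0..M}. \<Sum>n\<in>{0..M}. if j \<le> n then (-1)^n * of_nat (n choose j) * dk (n - j) (B (int n)) * dk j q else 0)"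
    unfolding A_def adjoint_coeff[OF B] sum_distrib_right by (intro sum.cong refl) simp
  also have "\<dots> = (\<Sum>n\<in>{0..M}. \<Sum>j\<in>{0..M}. if j \<le> n then (-1)^n * of_nat (n choose j) * dk (n - j) (B (int n)) * dk j q else 0)"
    by (rule sum.swap)
  also have "\<dots> = (\<Sum>n\<in>{0..M}. (-1)^n * dk n (q * B (int n)))"
  proof (rule sum.cong[OF refl])
    fix n assume n: "n \<in> {0..M}"
    have "{j \<in> {0..M}. j \<le> n} = {..n}" using n by auto
    hence "(\<Sum>j\<in>{0..M}. if j \<le> n then (-1)^n * of_nat (n choose j) * dk (n - j) (B (int n)) * dk j q else 0)
        = (\<Sum>j\<le>n. (-1)^n * of_nat (n choose j) * dk (n - j) (B (int n)) * dk j q)"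
      by (simp add: sum.inter_filter[symmetric])
    also have "\<dots> = (-1)^n * (\<Sum>j\<le>n. of_nat (n choose j) * dk j q * dk (n - j) (B (int n)))"
      by (simp add: sum_distrib_left mult_ac)
    also have "\<dots> = (-1)^n * dk n (q * B (int n))" by (simp add: dk_mult_leibniz)
    finally show "(\<Sum>j\<in>{0..M}. if j \<le> n then (-1)^n * of_nat (n choose j) * dk (n - j) (B (int n)) * dk j q else 0)
        = (-1)^n * dk n (q * B (int n))" .
  qed
  finally show ?thesis by (simp add: A_def)
qed

lemma apply_adjoint_ldiv_rem:
  assumes B: "is_diffop B"
  shows "apply_op der (adjoint der B) q = ldiv_rem (pm (cst q) B)"
proof -
  obtain M where M: "deg_le B (int M)" using is_pdo_deg_le_nat B diffop_pdo by blast
  have "ldiv_rem (pm (cst q) B) = (\<Sum>k\<in>{0..nat (int M + 1)}. (-1)^k * dk k (q * B (int k)))"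
    by (rule ldiv_rem_cst_mult[OF B M])
  also have "\<dots> = (\<Sum>k\<in>{0..Suc M}. (-1)^k * dk k (q * B (int k)))"
    by (simp add: nat_add_distrib)
  also have "\<dots> = (\<Sum>k\<in>{0..M}. (-1)^k * dk k (q * B (int k)))"
    using deg_le_zero[OF M, of "int (Suc M)"] by simp
  finally show ?thesis using apply_adjoint[OF B M] by simp
qed

lemma kernel_adjoint_iff:
  assumes B: "is_diffop B"
  shows "q \<in> kernel der (adjoint der B) \<longleftrightarrow> ldiv_rem (pm (cst q) B) = 0"
  by (simp add: kernel_def apply_adjoint_ldiv_rem[OF B])


section \<open>Kernels and linear independence over the constants\<close>

lemma lin_indep_C_nonzero: "lin_indep_C der n g \<Longrightarrow> i < n \<Longrightarrow> g i \<noteq> 0"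
proof
  assume L: "lin_indep_C der n g" and i: "i < n" and g0: "g i = 0"
  have "(\<Sum>k<n. (if k = i then 1 else 0) * g k) = (\<Sum>k<n. if k = i then g k else 0)"
    by (rule sum.cong) auto
  also have "\<dots> = 0" using g0 by (simp add: sum.delta)
  finally have s0: "(\<Sum>k<n. (if k = i then 1 else 0) * g k) = 0" .
  have LL: "\<And>c. (\<forall>k<n. der (c k) = 0) \<Longrightarrow> (\<Sum>k<n. c k * g k) = 0 \<Longrightarrow> \<forall>k<n. c k = 0"
    using L unfolding lin_indep_C_def by blast
  have "\<forall>k<n. (if k = i then 1 else 0::'a) = 0" by (rule LL) (simp_all add: s0)
  thus False using i by auto
qed

lemma span_elem: "i < n \<Longrightarrow> g i \<in> span_C der n g"
proof -
  assume i: "i < n"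
  have "(\<Sum>k<n. (if k = i then 1 else 0) * g k) = (\<Sum>k<n. if k = i then g k else 0)"
    by (rule sum.cong) auto
  also have "\<dots> = g i" using i by (simp add: sum.delta)
  finally show ?thesis unfolding span_C_def
    by (intro CollectI exI[of _ "\<lambda>k. if k = i then 1 else 0"]) auto
qed

lemma span_sub_kernel:
  assumes "\<forall>i<n. apply_op der P (f i) = 0"
  shows "span_C der n f \<subseteq> kernel der P"
proof
  fix x assume "x \<in> span_C der n f"
  then obtain c where c: "x = (\<Sum>i<n. c i * f i)" "\<forall>i<n. der (c i) = 0"
    by (auto simp: span_C_def)
  have "apply_op der P x = (\<Sum>i<n. c i * apply_op der P (f i))"
    unfolding c(1) by (rule apply_op_lin_comb) (use c(2) in auto)
  also have "\<dots> = 0" using assms by simp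
  finally show "x \<in> kernel der P" by (simp add: kernel_def)
qed

lemma lin_indep_C_extend:
  assumes L: "lin_indep_C der m g" and f: "f \<notin> span_C der m g"
  shows "lin_indep_C der (Suc m) (g(m := f))"
  unfolding lin_indep_C_def
proof (rule allI, rule impI)
  fix c assume c: "(\<forall>i<Suc m. der (c i) = 0) \<and> (\<Sum>i<Suc m. c i * (g(m := f)) i) = 0"
  have s: "(\<Sum>i<m. c i * g i) + c m * f = 0"
  proof -
    have "(\<Sum>i<Suc m. c i * (g(m := f)) i) = (\<Sum>i<m. c i * (g(m := f)) i) + c m * f" by simp
    also have "(\<Sum>i<m. c i * (g(m := f)) i) = (\<Sum>i<m. c i * g i)" by (rule sum.cong) auto
    finally show ?thesis using c by simp
  qed
  have cm: "c m = 0"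
  proof (rule ccontr)
    assume nz: "c m \<noteq> 0"
    have "f = (\<Sum>i<m. (- c i / c m) * g i)"
    proof -
      have "c m * f = - (\<Sum>i<m. c i * g i)" using s by (simp add: eq_neg_iff_add_eq_0 add.commute)
      hence "f = - (\<Sum>i<m. c i * g i) / c m" using nz by (simp add: field_simps)
      also have "\<dots> = (\<Sum>i<m. (- c i / c m) * g i)"
        by (simp add: sum_divide_distrib sum_negf[symmetric])
      finally show ?thesis .
    qed
    moreover have "\<forall>i<m. der (- c i / c m) = 0" using c by (auto intro!: der_divide_const)
    ultimately have "f \<in> span_C der m g" unfolding span_C_def
      by (intro CollectI exI[of _ "\<lambda>i. - c i / c m"]) auto
    thus False using f by simp
  qed
  hence "(\<Sum>i<m. c i * g i) = 0" using s by simp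
  hence "\<forall>i<m. c i = 0" using L c unfolding lin_indep_C_def by auto
  thus "\<forall>i<Suc m. c i = 0" using cm by (auto simp: less_Suc_eq)
qed

lemma indep_all_derivs_imp_zero:
  assumes ind: "lin_indep_C der n f"
  shows "(\<And>t. (\<Sum>i<n. a i * dk t (f i)) = 0) \<Longrightarrow> i < n \<Longrightarrow> a i = 0"
proof (induction "card {i. i < n \<and> a i \<noteq> 0}" arbitrary: a i rule: less_induct)
  case less
  show ?case
  proof (rule ccontr)
    assume nz: "a i \<noteq> 0"
    define b where "b k = a k / a i" for k
    have bsys: "(\<Sum>k<n. b k * dk t (f k)) = 0" for t
    proof -
      have "(\<Sum>k<n. b k * dk t (f k)) = (\<Sum>k<n. a k * dk t (f k) / a i)"
        by (rule sum.cong[OF refl]) (simp add: b_def)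
      also have "\<dots> = (\<Sum>k<n. a k * dk t (f k)) / a i"
        by (rule sum_divide_distrib[symmetric])
      finally show ?thesis using less.prems(1)[of t] by simp
    qed
    define c where "c k = der (b k)" for k
    have csys: "(\<Sum>k<n. c k * dk t (f k)) = 0" for t
    proof -
      have "der (\<Sum>k<n. b k * dk t (f k)) = (\<Sum>k<n. c k * dk t (f k) + b k * dk (Suc t) (f k))"
        unfolding der_sum by (rule sum.cong[OF refl]) (simp add: der_mult c_def)
      also have "\<dots> = (\<Sum>k<n. c k * dk t (f k)) + (\<Sum>k<n. b k * dk (Suc t) (f k))"
        by (rule sum.distrib)
      finally show ?thesis using bsys[of t] bsys[of "Suc t"] by simp
    qed
    have bi: "b i = 1" using nz by (simp add: b_def)
    have fin: "finite {k. k < n \<and> a k \<noteq> 0}" by simp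
    have sub: "{k. k < n \<and> c k \<noteq> 0} \<subseteq> {k. k < n \<and> a k \<noteq> 0} - {i}"
    proof
      fix k assume k: "k \<in> {k. k < n \<and> c k \<noteq> 0}"
      hence "k \<noteq> i" using bi by (auto simp: c_def)
      moreover have "a k \<noteq> 0" using k by (auto simp: c_def b_def)
      ultimately show "k \<in> {k. k < n \<and> a k \<noteq> 0} - {i}" using k by simp
    qed
    have "card {k. k < n \<and> c k \<noteq> 0} \<le> card ({k. k < n \<and> a k \<noteq> 0} - {i})"
      by (rule card_mono) (use sub fin in simp_all)
    also have "\<dots> < card {k. k < n \<and> a k \<noteq> 0}"
      by (rule card_Diff1_less[OF fin]) (use nz less.prems(2) in simp)
    finally have lt: "card {k. k < n \<and> c k \<noteq> 0} < card {k. k < n \<and> a k \<noteq> 0}" .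
    have c0: "c k = 0" if "k < n" for k
      by (rule less.hyps[OF lt]) (use csys that in simp_all)
    have h1: "\<forall>k<n. der (b k) = 0" using c0 by (simp add: c_def)
    have h2: "(\<Sum>k<n. b k * f k) = 0" using bsys[of 0] by simp
    have "\<forall>k<n. b k = 0" using ind h1 h2 unfolding lin_indep_C_def by blast
    thus False using bi less.prems(2) by simp
  qed
qed

lemma lin_indep_C_der_ratio:
  assumes L: "lin_indep_C der (Suc n) g" and g0: "g 0 \<noteq> 0"
  shows "lin_indep_C der n (\<lambda>i. der (g (Suc i) / g 0))"
  unfolding lin_indep_C_def
proof (rule allI, rule impI)
  fix c assume c: "(\<forall>i<n. der (c i) = 0) \<and> (\<Sum>i<n. c i * der (g (Suc i) / g 0)) = 0"
  have cc: "\<And>i. i < n \<Longrightarrow> der (c i) = 0" using c by blast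
  define e where "e = (\<Sum>i<n. c i * (g (Suc i) / g 0))"
  have "der e = (\<Sum>i<n. c i * der (g (Suc i) / g 0))"
    unfolding e_def der_sum by (rule sum.cong[OF refl]) (rule der_const_mult, simp add: cc)
  hence de: "der e = 0" using c by simp
  define c' where "c' i = (if i = 0 then - e else c (i - 1))" for i
  have "(\<Sum>i<Suc n. c' i * g i) = - e * g 0 + (\<Sum>i<n. c i * g (Suc i))"
    by (subst sum.lessThan_Suc_shift) (simp add: c'_def)
  also have "(\<Sum>i<n. c i * g (Suc i)) = e * g 0"
    unfolding e_def sum_distrib_right by (rule sum.cong[OF refl]) (use g0 in simp)
  finally have sz: "(\<Sum>i<Suc n. c' i * g i) = 0" by simp
  have dc': "\<forall>i<Suc n. der (c' i) = 0"
  proof (intro allI impI)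
    fix i assume i: "i < Suc n"
    show "der (c' i) = 0"
    proof (cases i)
      case 0 then show ?thesis using de by (simp add: c'_def)
    next
      case (Suc i') then show ?thesis using cc i by (simp add: c'_def)
    qed
  qed
  have z: "\<forall>i<Suc n. c' i = 0" using L sz dc' unfolding lin_indep_C_def by blast
  show "\<forall>i<n. c i = 0"
  proof (intro allI impI)
    fix i assume "i < n"
    hence "c' (Suc i) = 0" using z by simp
    thus "c i = 0" by (simp add: c'_def)
  qed
qed

lemma lin_indep_C_mult:
  assumes L: "lin_indep_C der n h" and f: "f \<noteq> 0"
  shows "lin_indep_C der n (\<lambda>i. f * h i)"
  unfolding lin_indep_C_def
proof (rule allI, rule impI)
  fix c assume c: "(\<forall>i<n. der (c i) = 0) \<and> (\<Sum>i<n. c i * (f * h i)) = 0"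
  have "(\<Sum>i<n. c i * (f * h i)) = f * (\<Sum>i<n. c i * h i)" by (simp add: sum_distrib_left mult_ac)
  hence "(\<Sum>i<n. c i * h i) = 0" using c f by simp
  thus "\<forall>i<n. c i = 0" using L c unfolding lin_indep_C_def by blast
qed

lemma span_shift:
  assumes R: "R \<in> span_C der n (\<lambda>i. g (Suc i) / g 0)" and g0: "g 0 \<noteq> 0"
  shows "R * g 0 \<in> span_C der (Suc n) g"
proof -
  obtain c where c: "R = (\<Sum>i<n. c i * (g (Suc i) / g 0))" "\<forall>i<n. der (c i) = 0"
    using R by (auto simp: span_C_def)
  define c' where "c' i = (if i = 0 then 0 else c (i - 1))" for i
  have "R * g 0 = (\<Sum>i<n. c i * g (Suc i))"
    unfolding c(1) sum_distrib_right by (rule sum.cong[OF refl]) (use g0 in simp)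
  also have "\<dots> = (\<Sum>i<Suc n. c' i * g i)"
    by (subst sum.lessThan_Suc_shift) (simp add: c'_def)
  finally show ?thesis unfolding span_C_def using c(2)
    by (intro CollectI exI[of _ c']) (auto simp: c'_def)
qed

lemma span_der:
  assumes r: "r \<in> span_C der n (\<lambda>i. der (s i))"
  shows "\<exists>R \<in> span_C der n s. r = der R"
proof -
  obtain c where c: "r = (\<Sum>i<n. c i * der (s i))" "\<forall>i<n. der (c i) = 0"
    using r by (auto simp: span_C_def)
  have "der (\<Sum>i<n. c i * s i) = r"
    unfolding c(1) der_sum by (rule sum.cong[OF refl]) (use c(2) in \<open>simp add: der_const_mult\<close>)
  moreover have "(\<Sum>i<n. c i * s i) \<in> span_C der n s" unfolding span_C_def using c(2) by blast
  ultimately show ?thesis by metis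
qed

lemma span_divide:
  assumes x: "x \<in> span_C der n (\<lambda>i. f * h i)" and that: "f \<noteq> 0"
  shows "inverse f * x \<in> span_C der n h"
proof -
  obtain c where c: "x = (\<Sum>i<n. c i * (f * h i))" "\<forall>i<n. der (c i) = 0"
    using x by (auto simp: span_C_def)
  have "inverse f * x = (\<Sum>i<n. c i * h i)"
    unfolding c(1) sum_distrib_left by (rule sum.cong[OF refl]) (use that in \<open>simp add: mult_ac\<close>)
  thus ?thesis unfolding span_C_def using c(2) by blast
qed

definition D_minus :: "'a \<Rightarrow> 'a pdo" where "D_minus u = (\<lambda>j. Dop j - cst u j)"

lemma diffop_D_minus[simp]: "is_diffop (D_minus u)"
  by (simp add: D_minus_def)

lemma apply_D_minus: "apply_op der (D_minus u) f = der f - u * f"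
  unfolding D_minus_def by (simp add: apply_op_diff_op)

lemma apply_D_minus_log_der: "f \<noteq> 0 \<Longrightarrow> apply_op der (D_minus (der f / f)) g = f * der (g / f)"
  by (simp add: apply_D_minus der_divide_mult)

lemma dord_D_minus: "dord (D_minus u) = 1" "D_minus u \<noteq> (\<lambda>_. 0)"
proof -
  have a: "D_minus u 1 = 1" "\<And>m. m > 1 \<Longrightarrow> D_minus u m = 0" by (auto simp: D_minus_def Dop_def cst_def)
  show "dord (D_minus u) = 1" using dord_eq[of "D_minus u" 1] a by simp
  show "D_minus u \<noteq> (\<lambda>_. 0)"
  proof
    assume "D_minus u = (\<lambda>_. 0)"
    hence "D_minus u 1 = 0" by simp
    thus False using a(1) by simp
  qed
qed

lemma rdiv_D_minus:
  "is_diffop P \<Longrightarrow> deg_le P (int N) \<Longrightarrow>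
    \<exists>Q r. is_diffop Q \<and> deg_le Q (int N - 1) \<and> P = (\<lambda>j. pm Q (D_minus u) j + cst r j)"
proof (induction N arbitrary: P)
  case 0
  have "P j = cst (P 0) j" for j
  proof (cases "j < 0")
    case True
    have "P j = 0" using 0(1) True by (rule diffop_neg)
    then show ?thesis using True by (simp add: cst_def)
  next
    case False then show ?thesis using 0 by (cases "j = 0") (auto simp: cst_def deg_le_def)
  qed
  hence "P = cst (P 0)" by (rule ext)
  hence "P = (\<lambda>j. pm (\<lambda>_. 0) (D_minus u) j + cst (P 0) j)" by simp
  thus ?case by (intro exI[of _ "\<lambda>_. 0"] exI[of _ "P 0"]) (simp add: deg_le_def)
next
  case (Suc N)
  define M where "M = monom_op (P (int (Suc N))) (int N)"
  have M: "is_diffop M" by (simp add: M_def)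
  have "pm M (D_minus u) = (\<lambda>j. pm M Dop j - pm M (cst u) j)"
    unfolding D_minus_def by (rule pm_diff_right) (use M in \<open>auto simp: diffop_pdo\<close>)
  also have "pm M Dop = monom_op (P (int (Suc N))) (int (Suc N))"
    using M by (auto simp: pm_Dop_right diffop_pdo M_def monom_op_def fun_eq_iff)
  finally have MD: "pm M (D_minus u) = (\<lambda>j. monom_op (P (int (Suc N))) (int (Suc N)) j - pm M (cst u) j)" .
  have bM: "deg_le M (int N)" by (simp add: deg_le_def M_def monom_op_def)
  have bMc: "deg_le (pm M (cst u)) (int N)"
    using deg_le_pmult[OF bM deg_le_cst] by simp
  define P' where "P' = (\<lambda>j. P j - pm M (D_minus u) j)"
  have P': "is_diffop P'" using Suc M by (simp add: P'_def)
  have bP': "deg_le P' (int N)"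
    using Suc.prems(2) bMc by (auto simp: deg_le_def P'_def MD monom_op_def)
  obtain Q r where Qr: "is_diffop Q" "deg_le Q (int N - 1)" "P' = (\<lambda>j. pm Q (D_minus u) j + cst r j)"
    using Suc.IH[OF P' bP'] by blast
  have "pm (\<lambda>j. Q j + M j) (D_minus u) = (\<lambda>j. pm Q (D_minus u) j + pm M (D_minus u) j)"
    by (rule pm_add_left) (use Qr M in \<open>auto simp: diffop_pdo\<close>)
  moreover have "P j = pm Q (D_minus u) j + pm M (D_minus u) j + cst r j" for j
    using fun_cong[OF Qr(3), of j] by (simp add: P'_def diff_eq_eq algebra_simps)
  ultimately have "P = (\<lambda>j. pm (\<lambda>j. Q j + M j) (D_minus u) j + cst r j)"
    by (simp add: fun_eq_iff)
  moreover have "deg_le (\<lambda>j. Q j + M j) (int (Suc N) - 1)"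
    using Qr(2) by (auto simp: deg_le_def M_def monom_op_def)
  ultimately show ?case using Qr M by (intro exI[of _ "\<lambda>j. Q j + M j"] exI[of _ r]) auto
qed

lemma diffop_right_factor_D_minus:
  assumes B: "is_diffop B" "B \<noteq> (\<lambda>_. 0)" and f: "f \<noteq> 0" "apply_op der B f = 0"
  obtains Y where "is_diffop Y" "Y \<noteq> (\<lambda>_. 0)" "B = pm Y (D_minus (der f / f))" "dord B = Suc (dord Y)"
proof -
  define u where "u = der f / f"
  have bB: "deg_le B (int (dord B))" using dord_leading(2)[OF B] by (simp add: deg_le_def)
  obtain Y r where Yr: "is_diffop Y" "B = (\<lambda>j. pm Y (D_minus u) j + cst r j)"
    using rdiv_D_minus[OF B(1) bB] by blast
  have "apply_op der B f = apply_op der Y (apply_op der (D_minus u) f) + r * f"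
    using Yr by (subst Yr(2)) (simp add: apply_op_add_op apply_op_pm)
  also have "apply_op der (D_minus u) f = 0" using f by (simp add: apply_D_minus u_def)
  finally have "r = 0" using f by simp
  hence BY: "B = pm Y (D_minus u)" using Yr(2) by (simp add: cst_def)
  have Ynz: "Y \<noteq> (\<lambda>_. 0)" using BY B(2) by auto
  have "dord B = Suc (dord Y)"
    using dord_pm(1)[OF Yr(1) Ynz diffop_D_minus dord_D_minus(2)] BY dord_D_minus(1) by simp
  thus ?thesis using that Yr(1) Ynz BY by (simp add: u_def)
qed

lemma lin_indep_kernel_le_dord:
  "is_diffop P \<Longrightarrow> P \<noteq> (\<lambda>_. 0) \<Longrightarrow> lin_indep_C der m g \<Longrightarrow> (\<forall>i<m. apply_op der P (g i) = 0)
    \<Longrightarrow> m \<le> dord P"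
proof (induction "dord P" arbitrary: P m g rule: less_induct)
  case less
  show ?case
  proof (cases m)
    case 0 then show ?thesis by simp
  next
    case (Suc m')
    have g0: "g 0 \<noteq> 0" using lin_indep_C_nonzero[OF less.prems(3)] Suc by simp
    obtain Q where Q: "is_diffop Q" "Q \<noteq> (\<lambda>_. 0)" "P = pm Q (D_minus (der (g 0) / g 0))"
      "dord P = Suc (dord Q)"
      using diffop_right_factor_D_minus[OF less.prems(1,2) g0] less.prems(4) Suc by auto
    define h where "h i = g 0 * der (g (Suc i) / g 0)" for i
    have "apply_op der P (g (Suc i)) = apply_op der Q (h i)" for i
      using Q g0 by (simp add: apply_op_pm apply_D_minus_log_der h_def)
    hence "\<forall>i<m'. apply_op der Q (h i) = 0" using less.prems(4) Suc by auto
    moreover have "lin_indep_C der m' h"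
      unfolding h_def using lin_indep_C_mult[OF lin_indep_C_der_ratio g0] less.prems(3) g0 Suc by simp
    ultimately have "m' \<le> dord Q" using less.hyps Q by auto
    thus ?thesis using Suc Q(4) by simp
  qed
qed

lemma kernel_eq_span:
  assumes P: "is_diffop P" "P \<noteq> (\<lambda>_. 0)" and L: "lin_indep_C der m g"
    and K: "\<forall>i<m. apply_op der P (g i) = 0" and m: "m = dord P"
  shows "kernel der P = span_C der m g"
proof
  show "span_C der m g \<subseteq> kernel der P" by (rule span_sub_kernel[OF K])
  show "kernel der P \<subseteq> span_C der m g"
  proof
    fix f assume f: "f \<in> kernel der P"
    show "f \<in> span_C der m g"
    proof (rule ccontr)
      assume "f \<notin> span_C der m g"
      hence L': "lin_indep_C der (Suc m) (g(m := f))" by (rule lin_indep_C_extend[OF L])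
      have "\<forall>i<Suc m. apply_op der P ((g(m := f)) i) = 0"
        using K f by (auto simp: kernel_def less_Suc_eq)
      hence "Suc m \<le> dord P" using lin_indep_kernel_le_dord[OF P L'] by blast
      thus False using m by simp
    qed
  qed
qed

lemma full_kernel_intro:
  assumes "is_diffop P" "P \<noteq> (\<lambda>_. 0)" "lin_indep_C der (dord P) g" "\<forall>i<dord P. apply_op der P (g i) = 0"
  shows "full_kernel der P"
  unfolding full_kernel_def using kernel_eq_span[OF assms refl] assms(3) by blast


section \<open>Weakly non-local operators\<close>

definition pDinvq_sum :: "nat \<Rightarrow> (nat \<Rightarrow> 'a) \<Rightarrow> (nat \<Rightarrow> 'a) \<Rightarrow> 'a pdo" where
  "pDinvq_sum n p q = (\<lambda>j. \<Sum>i<n. pDinvq (p i) (q i) j)"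

lemma pdo_pDinvq_sum[simp]: "is_pdo (pDinvq_sum n p q)"
  unfolding pDinvq_sum_def by (rule pdo_sum) simp

lemma wnl_form_eq: "wnl_form der E n p q = (\<lambda>j. E j + pDinvq_sum n p q j)"
  unfolding wnl_form_def pDinvq_sum_def pDinvq_eq by (rule ext) (simp add: if_distrib cong: if_cong)

lemma pDinvq_sum_nonneg: "j \<ge> 0 \<Longrightarrow> pDinvq_sum n p q j = 0"
  by (simp add: pDinvq_sum_def pDinvq_eq)

lemma pDinvq_sum_neg: "pDinvq_sum n p q (- int k - 1) = (-1) ^ k * (\<Sum>i<n. p i * dk k (q i))"
proof -
  have "nat (- (- int k - 1) - 1) = k" by simp
  thus ?thesis by (simp add: pDinvq_sum_def pDinvq_eq sum_distrib_left mult_ac)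
qed

lemma pDinvq_sum_zero: "pDinvq_sum n p (\<lambda>i. 0) = (\<lambda>_. 0)"
  by (simp add: pDinvq_sum_def pDinvq_eq fun_eq_iff cong: if_cong)

lemma pDinvq_sum_neg_eq_0_imp:
  assumes L: "lin_indep_C der n p" and W: "\<forall>j<0. pDinvq_sum n p r j = 0"
  shows "\<forall>i<n. r i = 0"
proof -
  have base: "(\<Sum>i<n. p i * dk k (r i)) = 0" for k
    using W[rule_format, of "- int k - 1"] by (simp add: pDinvq_sum_neg)
  have T: "(\<Sum>i<n. dk t (p i) * dk k (r i)) = 0" for t k
  proof (induction t arbitrary: k)
    case 0 then show ?case using base by simp
  next
    case (Suc t)
    have "der (\<Sum>i<n. dk t (p i) * dk k (r i)) =
        (\<Sum>i<n. dk (Suc t) (p i) * dk k (r i)) + (\<Sum>i<n. dk t (p i) * dk (Suc k) (r i))"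
      by (simp add: der_sum der_mult sum.distrib)
    then show ?case using Suc[of k] Suc[of "Suc k"] by simp
  qed
  show ?thesis
  proof (intro allI impI)
    fix i assume i: "i < n"
    show "r i = 0"
      by (rule indep_all_derivs_imp_zero[OF L _ i]) (use T[of _ 0] in \<open>simp add: mult.commute\<close>)
  qed
qed

lemma pm_pDinvq_diffop:
  assumes B: "is_diffop B"
  shows "pm (pDinvq p q) B = (\<lambda>j. p * ldiv_quot (pm (cst q) B) j + pDinvq p (ldiv_rem (pm (cst q) B)) j)"
proof -
  define X where "X = pm (cst q) B"
  have X: "is_diffop X" using B by (simp add: X_def)
  have XY: "X = (\<lambda>j. pm Dop (ldiv_quot X) j + cst (ldiv_rem X) j)" using ldiv_quot_rem(2)[OF X] .
  have Y: "is_diffop (ldiv_quot X)" using ldiv_quot_rem(1)[OF X] .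
  have "pm (pDinvq p q) B = pm (cst p) (pm (pm Dinv (cst q)) B)"
    unfolding pDinvq_def using B by (simp add: pm_assoc diffop_pdo)
  also have "pm (pm Dinv (cst q)) B = pm Dinv X"
    unfolding X_def using B by (simp add: pm_assoc diffop_pdo)
  also have "pm Dinv X = (\<lambda>j. pm Dinv (pm Dop (ldiv_quot X)) j + pm Dinv (cst (ldiv_rem X)) j)"
    by (subst XY) (rule pm_add_right, use Y in \<open>auto simp: diffop_pdo\<close>)
  also have "\<dots> = (\<lambda>j. ldiv_quot X j + pm Dinv (cst (ldiv_rem X)) j)"
    using Y by (simp add: pm_Dinv_Dop_cancel diffop_pdo)
  finally have 1: "pm (pDinvq p q) B = pm (cst p) (\<lambda>j. ldiv_quot X j + pm Dinv (cst (ldiv_rem X)) j)" .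
  have 2: "pm (cst p) (\<lambda>j. ldiv_quot X j + pm Dinv (cst (ldiv_rem X)) j) = (\<lambda>j. p * (ldiv_quot X j + pm Dinv (cst (ldiv_rem X)) j))"
    by (rule pm_cst_left) (use Y in \<open>simp add: diffop_pdo\<close>)
  have 3: "pDinvq p (ldiv_rem X) = (\<lambda>j. p * pm Dinv (cst (ldiv_rem X)) j)" unfolding pDinvq_def by (rule pm_cst_left) simp
  show ?thesis using 1 2 3 by (simp add: X_def distrib_left)
qed

lemma pm_pDinvq_sum_diffop:
  assumes B: "is_diffop B"
  shows "pm (pDinvq_sum n p q) B = (\<lambda>j. (\<Sum>i<n. p i * ldiv_quot (pm (cst (q i)) B) j) + pDinvq_sum n p (\<lambda>i. ldiv_rem (pm (cst (q i)) B)) j)"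
proof -
  have "pm (pDinvq_sum n p q) B = (\<lambda>j. \<Sum>i<n. pm (pDinvq (p i) (q i)) B j)"
    unfolding pDinvq_sum_def by (rule pm_sum_left) (use B in \<open>auto simp: diffop_pdo\<close>)
  thus ?thesis by (simp add: pm_pDinvq_diffop[OF B] sum.distrib pDinvq_sum_def)
qed

lemma pm_wnl_form_diffop:
  assumes E: "is_diffop E" and B: "is_diffop B"
  shows "pm (wnl_form der E n p q) B = (\<lambda>j. (pm E B j + (\<Sum>i<n. p i * ldiv_quot (pm (cst (q i)) B) j))
      + pDinvq_sum n p (\<lambda>i. ldiv_rem (pm (cst (q i)) B)) j)"
proof -
  have "pm (wnl_form der E n p q) B = (\<lambda>j. pm E B j + pm (pDinvq_sum n p q) B j)"
    unfolding wnl_form_eq by (rule pm_add_left) (use E B in \<open>auto simp: diffop_pdo\<close>)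
  thus ?thesis by (simp add: pm_pDinvq_sum_diffop[OF B] add.assoc)
qed

lemma diffop_pm_wnl_form_iff:
  assumes E: "is_diffop E" and B: "is_diffop B" and L: "lin_indep_C der n p"
  shows "is_diffop (pm (wnl_form der E n p q) B) \<longleftrightarrow> (\<forall>i<n. ldiv_rem (pm (cst (q i)) B) = 0)"
proof -
  define D where "D = (\<lambda>j. pm E B j + (\<Sum>i<n. p i * ldiv_quot (pm (cst (q i)) B) j))"
  define r where "r = (\<lambda>i. ldiv_rem (pm (cst (q i)) B))"
  have D: "is_diffop D" unfolding D_def
    by (rule diffop_add) (use E B ldiv_quot_rem(1) in \<open>auto intro!: diffop_sum diffop_smult\<close>)
  have eq: "pm (wnl_form der E n p q) B = (\<lambda>j. D j + pDinvq_sum n p r j)"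
    unfolding D_def r_def by (rule pm_wnl_form_diffop[OF E B])
  show ?thesis
  proof
    assume d: "is_diffop (pm (wnl_form der E n p q) B)"
    have "\<forall>j<0. pDinvq_sum n p r j = 0"
    proof (intro allI impI)
      fix j :: int assume j: "j < 0"
      have "D j + pDinvq_sum n p r j = 0" using diffop_neg[OF d j] by (simp add: eq)
      thus "pDinvq_sum n p r j = 0" using diffop_neg[OF D j] by simp
    qed
    thus "\<forall>i<n. ldiv_rem (pm (cst (q i)) B) = 0" using pDinvq_sum_neg_eq_0_imp[OF L] by (simp add: r_def)
  next
    assume "\<forall>i<n. ldiv_rem (pm (cst (q i)) B) = 0"
    hence "r = (\<lambda>i. if i < n then 0 else r i)" by (auto simp: r_def)
    hence "pDinvq_sum n p r = pDinvq_sum n p (\<lambda>i. 0)" unfolding pDinvq_sum_def by (metis (no_types, lifting) lessThan_iff sum.cong)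
    hence "pDinvq_sum n p r = (\<lambda>_. 0)" by (simp add: pDinvq_sum_zero)
    thus "is_diffop (pm (wnl_form der E n p q) B)" using D by (simp add: eq)
  qed
qed

lemma ldiv_rem_pm_monom1_right:
  assumes W: "is_diffop W"
  shows "ldiv_rem (pm W (monom_op c 1)) = - der (ldiv_rem W * c)"
proof -
  define Z where "Z = monom_op c 1"
  have Z: "is_diffop Z" by (simp add: Z_def)
  obtain Y where Y: "is_diffop Y" "W = (\<lambda>j. pm Dop Y j + cst (ldiv_rem W) j)"
    using ldiv_quot_rem[OF W] by blast
  have "pm W Z = (\<lambda>j. pm (pm Dop Y) Z j + pm (cst (ldiv_rem W)) Z j)"
    by (subst Y(2)) (rule pm_add_left, use Y Z in \<open>auto simp: diffop_pdo\<close>)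
  also have "pm (pm Dop Y) Z = pm Dop (pm Y Z)" using Y Z by (simp add: pm_assoc diffop_pdo)
  also have "pm (cst (ldiv_rem W)) Z = monom_op (ldiv_rem W * c) 1"
    by (simp add: pm_cst_left Z_def monom_op_def fun_eq_iff)
  finally have "ldiv_rem (pm W Z) = ldiv_rem (pm Dop (pm Y Z)) + ldiv_rem (monom_op (ldiv_rem W * c) 1)"
    using Y Z by (simp add: ldiv_rem_add diffop_pdo)
  also have "ldiv_rem (pm Dop (pm Y Z)) = 0" using Y Z by (simp add: ldiv_rem_pm_Dop)
  finally show ?thesis by (simp add: ldiv_rem_monom1 Z_def)
qed

text \<open>Multiplying on the right by \<open>c \<partial>\<close>, with \<open>c\<close> the inverse of the obstruction, kills one more
  remainder while keeping the old ones zero.\<close>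

lemma exists_diffop_ldiv_rem_zero:
  "\<exists>X. is_diffop X \<and> X \<noteq> (\<lambda>_. 0) \<and> dord X = k \<and> (\<forall>i<k. ldiv_rem (pm (cst (q i)) X) = 0)"
proof (induction k)
  case 0
  show ?case using dord_cst[of 1] cst_nz[of 1] by (intro exI[of _ "cst 1"]) simp
next
  case (Suc k)
  then obtain X where X: "is_diffop X" "X \<noteq> (\<lambda>_. 0)" "dord X = k" "\<forall>i<k. ldiv_rem (pm (cst (q i)) X) = 0"
    by blast
  define r where "r = ldiv_rem (pm (cst (q k)) X)"
  define c where "c = (if r = 0 then 1 else inverse r)"
  have c0: "c \<noteq> 0" by (simp add: c_def)
  have Z: "is_diffop (monom_op c 1)" "monom_op c 1 \<noteq> (\<lambda>_. 0)" "dord (monom_op c 1) = 1"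
    using diffop_monom_op[of 1 c] dord_monom1[OF c0] c0 by (auto simp: fun_eq_iff monom_op_def[of c 1])
  have "ldiv_rem (pm (cst (q i)) (pm X (monom_op c 1))) = 0" if i: "i < Suc k" for i
  proof -
    have "ldiv_rem (pm (cst (q i)) (pm X (monom_op c 1))) = - der (ldiv_rem (pm (cst (q i)) X) * c)"
      using X(1) Z(1) by (simp add: pm_assoc[symmetric] diffop_pdo ldiv_rem_pm_monom1_right)
    moreover have "ldiv_rem (pm (cst (q i)) X) * c = 0 \<or> ldiv_rem (pm (cst (q i)) X) * c = 1"
      using X(4) i c0 by (cases "i < k") (auto simp: less_Suc_eq r_def c_def)
    ultimately show ?thesis by auto
  qed
  moreover have "pm X (monom_op c 1) \<noteq> (\<lambda>_. 0)" "dord (pm X (monom_op c 1)) = Suc k"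
    using dord_pm[OF X(1,2) Z(1,2)] X(3) Z(3) by simp_all
  ultimately show ?case using X(1) Z(1) by (intro exI[of _ "pm X (monom_op c 1)"]) simp
qed

lemma inv_coeff_eq: "inv_coeff_D q = pm (cst (inverse q)) Dop"
  by (simp add: pm_cst_left inv_coeff_D_def Dop_def fun_eq_iff)

lemma right_factor_inv_coeff_D_iff:
  assumes q: "q \<noteq> 0" and M: "is_diffop M"
  shows "(\<exists>Y. is_diffop Y \<and> M = pm (inv_coeff_D q) Y) \<longleftrightarrow> ldiv_rem (pm (cst q) M) = 0"
proof
  assume "\<exists>Y. is_diffop Y \<and> M = pm (inv_coeff_D q) Y"
  then obtain Y where Y: "is_diffop Y" "M = pm (inv_coeff_D q) Y" by blast
  have "pm (cst q) M = pm (pm (cst q) (cst (inverse q))) (pm Dop Y)"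
    unfolding Y(2) inv_coeff_eq using Y by (simp add: pm_assoc diffop_pdo)
  also have "\<dots> = pm Dop Y" using q Y by (simp add: pm_cst_cst diffop_pdo)
  finally show "ldiv_rem (pm (cst q) M) = 0" using Y by (simp add: ldiv_rem_pm_Dop)
next
  assume "ldiv_rem (pm (cst q) M) = 0"
  then obtain Y where Y: "is_diffop Y" "pm (cst q) M = pm Dop Y"
    using ldiv_rem_eq_0_iff[of "pm (cst q) M"] M by auto
  have "pm (inv_coeff_D q) Y = pm (pm (cst (inverse q)) (cst q)) M"
    unfolding inv_coeff_eq using Y M by (simp add: pm_assoc diffop_pdo)
  also have "\<dots> = M" using q M by (simp add: pm_cst_cst diffop_pdo)
  finally show "\<exists>Y. is_diffop Y \<and> M = pm (inv_coeff_D q) Y" using Y(1) by metis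
qed

lemma right_lcm_inv_coeff_D:
  assumes B: "is_diffop B" and q: "\<forall>i<n. q i \<noteq> 0"
    and B_rem: "\<forall>i<n. ldiv_rem (pm (cst (q i)) B) = 0"
    and B_div: "\<And>X. is_diffop X \<Longrightarrow> X \<noteq> (\<lambda>_. 0) \<Longrightarrow> \<forall>i<n. ldiv_rem (pm (cst (q i)) X) = 0
      \<Longrightarrow> \<exists>Z. is_diffop Z \<and> X = pm B Z"
  shows "is_right_lcm der B n (\<lambda>i. inv_coeff_D (q i))"
  unfolding is_right_lcm_def
proof (intro conjI allI impI)
  fix i assume i: "i < n"
  show "\<exists>X. is_diffop X \<and> B = pm (inv_coeff_D (q i)) X"
    using right_factor_inv_coeff_D_iff[OF q[rule_format, OF i] B] B_rem i by blast
next
  fix M assume M: "is_diffop M \<and> (\<forall>i<n. \<exists>Y. is_diffop Y \<and> M = pm (inv_coeff_D (q i)) Y)"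
  hence "\<forall>i<n. ldiv_rem (pm (cst (q i)) M) = 0"
    using right_factor_inv_coeff_D_iff q by blast
  thus "\<exists>Z. is_diffop Z \<and> M = pm B Z"
    using B_div M by (cases "M = (\<lambda>_. 0)") (auto intro: exI[of _ "\<lambda>_. 0"])
qed (rule B)

lemma minimal_rfd_indep_wnl_form:
  assumes MR: "minimal_rfd der L A B" and E: "is_diffop E" and Ldef: "L = wnl_form der E n p q"
    and Lp: "lin_indep_C der n p" and Lq: "lin_indep_C der n q"
  shows "dord B = n \<and> is_right_lcm der B n (\<lambda>i. inv_coeff_D (q i))
    \<and> kernel der (adjoint der B) = span_C der n q"
proof -
  have MIN: "\<And>A' B'. right_frac der L A' B' \<Longrightarrow> \<exists>D. is_diffop D \<and> A' = pm A D \<and> B' = pm B D"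
    using MR unfolding minimal_rfd_def by blast
  have B: "is_diffop B" "B \<noteq> (\<lambda>_. 0)" and A: "is_diffop (pm L B)"
    using MR unfolding minimal_rfd_def right_frac_def nonzero_op_iff by blast+
  have L_diffop_iff: "is_diffop (pm L X) \<longleftrightarrow> (\<forall>i<n. ldiv_rem (pm (cst (q i)) X) = 0)"
    if "is_diffop X" for X
    unfolding Ldef by (rule diffop_pm_wnl_form_iff[OF E that Lp])
  have B_div: "\<exists>Z. is_diffop Z \<and> X = pm B Z"
    if "is_diffop X" "X \<noteq> (\<lambda>_. 0)" "\<forall>i<n. ldiv_rem (pm (cst (q i)) X) = 0" for X
    using MIN[of "pm L X" X] that L_diffop_iff[of X] by (auto simp: right_frac_def nonzero_op_iff)
  have B_rem: "\<forall>i<n. ldiv_rem (pm (cst (q i)) B) = 0" using L_diffop_iff[OF B(1)] A by simp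
  hence qB: "\<forall>i<n. apply_op der (adjoint der B) (q i) = 0"
    by (simp add: apply_adjoint_ldiv_rem[OF B(1)])
  have AB: "is_diffop (adjoint der B)" "adjoint der B \<noteq> (\<lambda>_. 0)" "dord (adjoint der B) = dord B"
    using diffop_adjoint[OF B(1)] dord_adj[OF B] by auto
  have n_le: "n \<le> dord B" using lin_indep_kernel_le_dord[OF AB(1,2) Lq qB] AB(3) by simp
  obtain X where X: "is_diffop X" "X \<noteq> (\<lambda>_. 0)" "dord X = n"
      "\<forall>i<n. ldiv_rem (pm (cst (q i)) X) = 0"
    using exists_diffop_ldiv_rem_zero by blast
  obtain D where D: "is_diffop D" "X = pm B D" using B_div[OF X(1,2,4)] by blast
  have "D \<noteq> (\<lambda>_. 0)" using D X(2) by auto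
  hence "dord X = dord B + dord D" using dord_pm(1)[OF B D(1)] D(2) by simp
  hence dB: "dord B = n" using n_le X(3) by simp
  have "kernel der (adjoint der B) = span_C der n q"
    by (rule kernel_eq_span[OF AB(1,2) Lq qB]) (simp add: AB(3) dB)
  moreover have "is_right_lcm der B n (\<lambda>i. inv_coeff_D (q i))"
    using right_lcm_inv_coeff_D[OF B(1) _ B_rem B_div] lin_indep_C_nonzero[OF Lq] by blast
  ultimately show ?thesis using dB by blast
qed


section \<open>Weakly non-local inverses\<close>

definition rquot_D :: "'a pdo \<Rightarrow> 'a pdo" where "rquot_D X = (\<lambda>j. if j < 0 then 0 else X (j + 1))"

lemma diffop_rquot_D[simp]: "is_diffop X \<Longrightarrow> is_diffop (rquot_D X)"
proof -
  assume X: "is_diffop X"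
  then obtain N where "deg_le X N" using diffop_pdo is_pdo_iff_deg_le by blast
  hence "deg_le (rquot_D X) N" by (auto simp: deg_le_def rquot_D_def)
  thus ?thesis by (auto simp: is_diffop_def is_pdo_iff_deg_le rquot_D_def)
qed

lemma rquot_D_eq:
  assumes X: "is_diffop X"
  shows "X = (\<lambda>j. pm (rquot_D X) Dop j + cst (X 0) j)"
proof
  fix j
  have "pm (rquot_D X) Dop j = rquot_D X (j - 1)" using X by (simp add: pm_Dop_right diffop_pdo)
  thus "X j = pm (rquot_D X) Dop j + cst (X 0) j"
    using diffop_neg[OF X, of j] by (auto simp: rquot_D_def cst_def)
qed

lemma pm_Dinv_cst_right:
  assumes X: "is_diffop X"
  shows "pm X (pm Dinv (cst q)) = (\<lambda>j. pm (rquot_D X) (cst q) j + pDinvq (X 0) q j)"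
proof -
  have S: "is_diffop (rquot_D X)" using X by simp
  have "pm X (pm Dinv (cst q)) = pm (\<lambda>j. pm (rquot_D X) Dop j + cst (X 0) j) (pm Dinv (cst q))"
    using rquot_D_eq[OF X] by simp
  also have "\<dots> = (\<lambda>j. pm (pm (rquot_D X) Dop) (pm Dinv (cst q)) j + pm (cst (X 0)) (pm Dinv (cst q)) j)"
    by (rule pm_add_left) (use S in \<open>auto simp: diffop_pdo\<close>)
  also have "pm (pm (rquot_D X) Dop) (pm Dinv (cst q)) = pm (rquot_D X) (cst q)"
    using S by (simp add: pm_assoc diffop_pdo pm_Dop_Dinv_cancel)
  finally show ?thesis by (simp add: pDinvq_def)
qed

lemma pm_pDinvq_right:
  assumes B: "is_diffop B"
  shows "pm B (pDinvq p q) = (\<lambda>j. pm (rquot_D (pm B (cst p))) (cst q) j + pDinvq (apply_op der B p) q j)"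
proof -
  have X: "is_diffop (pm B (cst p))" using B by simp
  have "pm B (pDinvq p q) = pm (pm B (cst p)) (pm Dinv (cst q))"
    unfolding pDinvq_def using B by (simp add: pm_assoc diffop_pdo)
  also have "\<dots> = (\<lambda>j. pm (rquot_D (pm B (cst p))) (cst q) j + pDinvq (pm B (cst p) 0) q j)"
    by (rule pm_Dinv_cst_right[OF X])
  finally show ?thesis using B by (simp add: apply_op_eq_pm)
qed

lemma Dinv_der_Dinv: "pm Dinv (pm (cst (der R)) Dinv) = (\<lambda>j. pm (cst R) Dinv j - pm Dinv (cst R) j)"
proof -
  have e: "cst (der R) = (\<lambda>j. pm Dop (cst R) j - pm (cst R) Dop j)"
    using pm_Dop_cst by (simp add: fun_eq_iff)
  have "pm (cst (der R)) Dinv = (\<lambda>j. pm (pm Dop (cst R)) Dinv j - pm (pm (cst R) Dop) Dinv j)"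
    by (subst e) (rule pm_diff_left, auto)
  also have "pm (pm Dop (cst R)) Dinv = pm Dop (pm (cst R) Dinv)" by (simp add: pm_assoc)
  also have "pm (pm (cst R) Dop) Dinv = cst R" by (simp add: pm_assoc pm_Dop_Dinv)
  finally have "pm Dinv (pm (cst (der R)) Dinv) = pm Dinv (\<lambda>j. pm Dop (pm (cst R) Dinv) j - cst R j)" by simp
  also have "\<dots> = (\<lambda>j. pm Dinv (pm Dop (pm (cst R) Dinv)) j - pm Dinv (cst R) j)"
    by (rule pm_diff_right) auto
  also have "pm Dinv (pm Dop (pm (cst R) Dinv)) = pm (cst R) Dinv" by (simp add: pm_Dinv_Dop_cancel)
  finally show ?thesis .
qed

lemma pm_cst_pDinvq: "pm (cst a) (pDinvq p q) = pDinvq (a * p) q"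
  by (simp add: pDinvq_def pm_assoc[symmetric] pm_cst_cst)

lemma pm_pDinvq_der_Dinv: "pm (pDinvq p (der R)) (pm Dinv (cst s)) = (\<lambda>j. pDinvq (p * R) s j - pDinvq p (R * s) j)"
proof -
  have "pm (pDinvq p (der R)) (pm Dinv (cst s)) = pm (cst p) (pm (pm Dinv (pm (cst (der R)) Dinv)) (cst s))"
    by (simp add: pDinvq_def pm_assoc)
  also have "\<dots> = pm (cst p) (\<lambda>j. pm (pm (cst R) Dinv) (cst s) j - pm (pm Dinv (cst R)) (cst s) j)"
    unfolding Dinv_der_Dinv by (subst pm_diff_left) auto
  also have "\<dots> = (\<lambda>j. pm (cst p) (pm (pm (cst R) Dinv) (cst s)) j - pm (cst p) (pm (pm Dinv (cst R)) (cst s)) j)"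
    by (rule pm_diff_right) auto
  also have "pm (cst p) (pm (pm (cst R) Dinv) (cst s)) = pDinvq (p * R) s"
    by (simp add: pDinvq_def pm_assoc[symmetric] pm_cst_cst)
  also have "pm (cst p) (pm (pm Dinv (cst R)) (cst s)) = pDinvq p (R * s)"
    by (simp add: pDinvq_def pm_assoc pm_cst_cst)
  finally show ?thesis .
qed

lemma pm_cst_Dinv_pDinvq_der:
  "pm (cst f) (pm Dinv (pDinvq (der R) r)) = (\<lambda>j. pDinvq (f * R) r j - pDinvq f (R * r) j)"
  using pm_pDinvq_der_Dinv[of f R r] by (simp add: pDinvq_def pm_assoc)

lemma pm_cst_Dinv_diffop:
  assumes E: "is_diffop E"
  shows "pm (cst f) (pm Dinv (pm (cst g) E))
    = (\<lambda>j. f * ldiv_quot (pm (cst g) E) j + pDinvq f (ldiv_rem (pm (cst g) E)) j)"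
  using pm_pDinvq_diffop[OF E, of f g] E by (simp add: pDinvq_def pm_assoc diffop_pdo)

definition wnl_in :: "'a pdo \<Rightarrow> 'a set \<Rightarrow> 'a set \<Rightarrow> bool" where
  "wnl_in X Vp Vq \<longleftrightarrow> (\<exists>E m p q. is_diffop E \<and> X = (\<lambda>j. E j + pDinvq_sum m p q j)
     \<and> (\<forall>i<m. p i \<in> Vp \<and> q i \<in> Vq))"

lemma pDinvq_sum_append:
  "pDinvq_sum m p q j + pDinvq_sum m' p' q' j =
   pDinvq_sum (m + m') (\<lambda>i. if i < m then p i else p' (i - m)) (\<lambda>i. if i < m then q i else q' (i - m)) j"
proof (induction m')
  case 0
  have "pDinvq_sum m p q j = pDinvq_sum m (\<lambda>i. if i < m then p i else p' (i - m)) (\<lambda>i. if i < m then q i else q' (i - m)) j"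
    unfolding pDinvq_sum_def by (rule sum.cong) auto
  then show ?case by (simp add: pDinvq_sum_def)
next
  case (Suc m')
  have e1: "pDinvq_sum (Suc m') p' q' j = pDinvq_sum m' p' q' j + pDinvq (p' m') (q' m') j" by (simp add: pDinvq_sum_def)
  have e2: "pDinvq_sum (m + Suc m') (\<lambda>i. if i < m then p i else p' (i - m)) (\<lambda>i. if i < m then q i else q' (i - m)) j
    = pDinvq_sum (m + m') (\<lambda>i. if i < m then p i else p' (i - m)) (\<lambda>i. if i < m then q i else q' (i - m)) j
      + pDinvq (p' m') (q' m') j" by (simp add: pDinvq_sum_def)
  show ?case unfolding e1 e2 Suc.IH[symmetric] by (simp add: add.assoc)
qed

lemma wnl_in_add:
  assumes "wnl_in X Vp Vq" "wnl_in Y Vp Vq"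
  shows "wnl_in (\<lambda>j. X j + Y j) Vp Vq"
proof -
  obtain E m p q where X: "is_diffop E" "X = (\<lambda>j. E j + pDinvq_sum m p q j)" "\<forall>i<m. p i \<in> Vp \<and> q i \<in> Vq"
    using assms(1) unfolding wnl_in_def by blast
  obtain E' m' p' q' where Y: "is_diffop E'" "Y = (\<lambda>j. E' j + pDinvq_sum m' p' q' j)" "\<forall>i<m'. p' i \<in> Vp \<and> q' i \<in> Vq"
    using assms(2) unfolding wnl_in_def by blast
  define P where "P = (\<lambda>i. if i < m then p i else p' (i - m))"
  define Q where "Q = (\<lambda>i. if i < m then q i else q' (i - m))"
  have "(\<lambda>j. X j + Y j) = (\<lambda>j. (\<lambda>j. E j + E' j) j + pDinvq_sum (m + m') P Q j)"
    using pDinvq_sum_append[of m p q _ m' p' q'] by (auto simp: X(2) Y(2) P_def Q_def fun_eq_iff algebra_simps)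
  moreover have "\<forall>i<m + m'. P i \<in> Vp \<and> Q i \<in> Vq" using X(3) Y(3) by (auto simp: P_def Q_def)
  ultimately show ?thesis unfolding wnl_in_def using X(1) Y(1)
    by (intro exI[of _ "\<lambda>j. E j + E' j"] exI[of _ "m + m'"] exI[of _ P] exI[of _ Q]) auto
qed

lemma wnl_in_diffop: "is_diffop E \<Longrightarrow> wnl_in E Vp Vq"
  unfolding wnl_in_def by (intro exI[of _ E] exI[of _ 0]) (simp add: pDinvq_sum_def)

lemma wnl_in_pDinvq: "p \<in> Vp \<Longrightarrow> q \<in> Vq \<Longrightarrow> wnl_in (pDinvq p q) Vp Vq"
  unfolding wnl_in_def
  by (intro exI[of _ "\<lambda>_. 0"] exI[of _ 1] exI[of _ "\<lambda>_. p"] exI[of _ "\<lambda>_. q"]) (simp add: pDinvq_sum_def)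

lemma pDinvq_sum_uminus: "pDinvq_sum m (\<lambda>i. - p i) q j = - pDinvq_sum m p q j"
  by (simp add: pDinvq_sum_def pDinvq_eq sum_negf[symmetric] if_distrib cong: if_cong)

lemma wnl_in_uminus:
  assumes Vp: "\<And>x. x \<in> Vp \<Longrightarrow> - x \<in> Vp" and X: "wnl_in X Vp Vq"
  shows "wnl_in (\<lambda>j. - X j) Vp Vq"
proof -
  obtain E m p q where E: "is_diffop E" "X = (\<lambda>j. E j + pDinvq_sum m p q j)" "\<forall>i<m. p i \<in> Vp \<and> q i \<in> Vq"
    using X unfolding wnl_in_def by blast
  have "(\<lambda>j. - X j) = (\<lambda>j. (\<lambda>j. - E j) j + (\<lambda>j. - pDinvq_sum m p q j) j)" by (simp add: E(2))
  also have "\<dots> = (\<lambda>j. (\<lambda>j. - E j) j + pDinvq_sum m (\<lambda>i. - p i) q j)" by (simp add: pDinvq_sum_uminus)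
  finally show ?thesis unfolding wnl_in_def using E Vp
    by (intro exI[of _ "\<lambda>j. - E j"] exI[of _ m] exI[of _ "\<lambda>i. - p i"] exI[of _ q])
      (auto simp: is_diffop_def)
qed

lemma wnl_in_diff:
  assumes "\<And>x. x \<in> Vp \<Longrightarrow> - x \<in> Vp" "wnl_in X Vp Vq" "wnl_in Y Vp Vq"
  shows "wnl_in (\<lambda>j. X j - Y j) Vp Vq"
  using wnl_in_add[OF assms(2) wnl_in_uminus[OF assms(1,3)]] by simp

lemma wnl_in_sum:
  assumes "finite S" "\<And>i. i \<in> S \<Longrightarrow> wnl_in (f i) Vp Vq"
  shows "wnl_in (\<lambda>j. \<Sum>i\<in>S. f i j) Vp Vq"
  using assms
proof (induction S rule: finite_induct)
  case empty then show ?case using wnl_in_diffop[of "\<lambda>_. 0"] by simp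
next
  case (insert x F)
  then show ?case using wnl_in_add[of "f x" Vp Vq "\<lambda>j. \<Sum>i\<in>F. f i j"] by simp
qed

lemma wnl_in_pdo: "wnl_in X Vp Vq \<Longrightarrow> is_pdo X"
  unfolding wnl_in_def by (auto simp: diffop_pdo)

lemma wnl_in_imp_wnl_form: "wnl_in X Vp Vq \<Longrightarrow> \<exists>E m p q. is_diffop E \<and> X = wnl_form der E m p q \<and> (\<forall>i<m. p i \<in> Vp \<and> q i \<in> Vq)"
  unfolding wnl_in_def wnl_form_eq by blast

lemma span_C_uminus:
  assumes "x \<in> span_C der n f"
  shows "- x \<in> span_C der n f"
proof -
  obtain c where c: "x = (\<Sum>i<n. c i * f i)" "\<forall>i<n. der (c i) = 0"
    using assms by (auto simp: span_C_def)
  have "- x = (\<Sum>i<n. (- c i) * f i)" by (simp add: c(1) sum_negf[symmetric])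
  thus ?thesis unfolding span_C_def using c(2) by (intro CollectI exI[of _ "\<lambda>i. - c i"]) simp
qed

lemma pDinvq_sum_eqI:
  assumes "\<And>k. (\<Sum>i<n. p i * dk k (q i)) = (\<Sum>i<m. p' i * dk k (q' i))"
  shows "pDinvq_sum n p q = pDinvq_sum m p' q'"
proof
  fix j :: int
  show "pDinvq_sum n p q j = pDinvq_sum m p' q' j"
  proof (cases "j < 0")
    case True
    define k where "k = nat (- j - 1)"
    have j: "j = - int k - 1" using True by (simp add: k_def)
    show ?thesis unfolding j pDinvq_sum_neg assms ..
  next
    case False then show ?thesis by (simp add: pDinvq_sum_nonneg)
  qed
qed

lemma not_lin_indep_C_Suc:
  assumes "\<not> lin_indep_C der (Suc n) f"
  obtains j d where "j < Suc n" "\<forall>i<n. der (d i) = 0" "f j = (\<Sum>i<n. d i * f (skip_index j i))"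
proof -
  obtain c where c: "\<forall>i<Suc n. der (c i) = 0" "(\<Sum>i<Suc n. c i * f i) = 0" "\<exists>i<Suc n. c i \<noteq> 0"
    using assms unfolding lin_indep_C_def by blast
  then obtain j where j: "j < Suc n" "c j \<noteq> 0" by blast
  define d where "d i = - c (skip_index j i) / c j" for i
  have "\<forall>i<n. der (d i) = 0"
    using c(1) j by (auto simp: d_def skip_index_def intro!: der_divide_const)
  moreover have "c j * f j + (\<Sum>i<n. c (skip_index j i) * f (skip_index j i)) = 0"
    using c(2) sum_lessThan_Suc_remove[OF j(1), of "\<lambda>i. c i * f i"] by simp
  hence "f j = - (\<Sum>i<n. c (skip_index j i) * f (skip_index j i)) / c j" using j(2)
    by (simp add: field_simps eq_neg_iff_add_eq_0)
  hence "f j = (\<Sum>i<n. d i * f (skip_index j i))"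
    by (simp add: d_def sum_divide_distrib sum_negf[symmetric])
  ultimately show ?thesis using that j(1) by blast
qed

lemma pDinvq_sum_elim_left:
  assumes j: "j < Suc n" and d: "\<forall>i<n. der (d i) = 0" and pj: "p j = (\<Sum>i<n. d i * p (skip_index j i))"
  shows "pDinvq_sum (Suc n) p q
    = pDinvq_sum n (\<lambda>i. p (skip_index j i)) (\<lambda>i. q (skip_index j i) + d i * q j)"
proof (rule pDinvq_sum_eqI)
  fix k
  have "(\<Sum>i<Suc n. p i * dk k (q i))
      = p j * dk k (q j) + (\<Sum>i<n. p (skip_index j i) * dk k (q (skip_index j i)))"
    using sum_lessThan_Suc_remove[OF j] .
  also have "p j * dk k (q j) = (\<Sum>i<n. d i * p (skip_index j i) * dk k (q j))"
    by (simp add: pj sum_distrib_right)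
  finally show "(\<Sum>i<Suc n. p i * dk k (q i))
      = (\<Sum>i<n. p (skip_index j i) * dk k (q (skip_index j i) + d i * q j))"
    using d by (simp add: dk_add dk_const_mult sum.distrib[symmetric] algebra_simps)
qed

lemma pDinvq_sum_elim_right:
  assumes j: "j < Suc n" and d: "\<forall>i<n. der (d i) = 0" and qj: "q j = (\<Sum>i<n. d i * q (skip_index j i))"
  shows "pDinvq_sum (Suc n) p q
    = pDinvq_sum n (\<lambda>i. p (skip_index j i) + d i * p j) (\<lambda>i. q (skip_index j i))"
proof (rule pDinvq_sum_eqI)
  fix k
  have "(\<Sum>i<Suc n. p i * dk k (q i))
      = p j * dk k (q j) + (\<Sum>i<n. p (skip_index j i) * dk k (q (skip_index j i)))"
    using sum_lessThan_Suc_remove[OF j] .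
  also have "p j * dk k (q j) = (\<Sum>i<n. d i * p j * dk k (q (skip_index j i)))"
    using d by (simp add: qj dk_sum dk_const_mult sum_distrib_left mult_ac)
  finally show "(\<Sum>i<Suc n. p i * dk k (q i))
      = (\<Sum>i<n. (p (skip_index j i) + d i * p j) * dk k (q (skip_index j i)))"
    by (simp add: sum.distrib[symmetric] algebra_simps)
qed

text \<open>A dependency among the \<open>p\<^sub>i\<close> (or the \<open>q\<^sub>i\<close>) lets one term be absorbed into the others.\<close>

lemma pDinvq_sum_indep_form:
  "\<exists>m p' q'. pDinvq_sum n p q = pDinvq_sum m p' q' \<and> lin_indep_C der m p' \<and> lin_indep_C der m q'"
proof (induction n arbitrary: p q)
  case 0
  show ?case by (intro exI[of _ 0] exI[of _ p] exI[of _ q]) (simp add: lin_indep_C_def)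
next
  case (Suc n)
  consider "lin_indep_C der (Suc n) p \<and> lin_indep_C der (Suc n) q"
    | "\<not> lin_indep_C der (Suc n) p" | "\<not> lin_indep_C der (Suc n) q" by blast
  then show ?case
  proof cases
    case 2
    then obtain j d where "j < Suc n" "\<forall>i<n. der (d i) = 0" "p j = (\<Sum>i<n. d i * p (skip_index j i))"
      by (rule not_lin_indep_C_Suc)
    hence "pDinvq_sum (Suc n) p q
        = pDinvq_sum n (\<lambda>i. p (skip_index j i)) (\<lambda>i. q (skip_index j i) + d i * q j)"
      by (rule pDinvq_sum_elim_left)
    then show ?thesis using Suc.IH by metis
  next
    case 3
    then obtain j d where "j < Suc n" "\<forall>i<n. der (d i) = 0" "q j = (\<Sum>i<n. d i * q (skip_index j i))"
      by (rule not_lin_indep_C_Suc)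
    hence "pDinvq_sum (Suc n) p q
        = pDinvq_sum n (\<lambda>i. p (skip_index j i) + d i * p j) (\<lambda>i. q (skip_index j i))"
      by (rule pDinvq_sum_elim_right)
    then show ?thesis using Suc.IH by metis
  qed blast
qed

lemma wnl_in_indep_form:
  assumes "wnl_in N Vp Vq"
  shows "\<exists>E m p q. is_diffop E \<and> N = wnl_form der E m p q \<and> lin_indep_C der m p \<and> lin_indep_C der m q"
proof -
  obtain E m p q where E: "is_diffop E" "N = (\<lambda>j. E j + pDinvq_sum m p q j)"
    using assms unfolding wnl_in_def by blast
  obtain m' p' q' where "pDinvq_sum m p q = pDinvq_sum m' p' q'" "lin_indep_C der m' p'" "lin_indep_C der m' q'"
    using pDinvq_sum_indep_form by blast
  thus ?thesis using E
    by (intro exI[of _ E] exI[of _ m'] exI[of _ p'] exI[of _ q']) (simp add: wnl_form_eq)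
qed

lemma ldiv_rem_der_ratio:
  assumes B: "is_diffop B" and Y: "is_diffop Y" "pm (cst f) B = pm Dop Y"
    and f: "f \<noteq> 0" and g: "ldiv_rem (pm (cst g) B) = 0"
  shows "ldiv_rem (pm (cst (der (g / f))) Y) = 0"
proof -
  define s where "s = g / f"
  obtain Z where Z: "is_diffop Z" "pm (cst g) B = pm Dop Z"
    using ldiv_rem_eq_0_iff[of "pm (cst g) B"] B g by auto
  have "pm (cst s) (pm Dop Y) = pm (cst g) B"
    unfolding Y(2)[symmetric] using B f by (simp add: pm_assoc[symmetric] diffop_pdo pm_cst_cst s_def)
  moreover have "pm (cst s) (pm Dop Y) = pm (pm (cst s) Dop) Y" using Y by (simp add: pm_assoc diffop_pdo)
  moreover have "pm (cst s) Dop = (\<lambda>j. pm Dop (cst s) j - cst (der s) j)"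
    using pm_Dop_cst[of s] by (simp add: fun_eq_iff)
  moreover have "pm (\<lambda>j. pm Dop (cst s) j - cst (der s) j) Y
      = (\<lambda>j. pm Dop (pm (cst s) Y) j - pm (cst (der s)) Y j)"
    using Y by (simp add: pm_diff_left pm_assoc diffop_pdo)
  ultimately have "pm (cst (der s)) Y = (\<lambda>j. pm Dop (pm (cst s) Y) j - pm Dop Z j)"
    using Z(2) by (simp add: fun_eq_iff algebra_simps)
  also have "\<dots> = pm Dop (\<lambda>j. pm (cst s) Y j - Z j)"
    by (rule pm_diff_right[symmetric]) (use Y Z in \<open>auto simp: diffop_pdo\<close>)
  finally show ?thesis using Y Z by (simp add: ldiv_rem_pm_Dop s_def)
qed

lemma wnl_in_pm_Dinv_cst:
  assumes NY: "wnl_in NY UNIV (span_C der n (\<lambda>i. der (\<psi> (Suc i) / \<psi> 0)))" and p0: "\<psi> 0 \<noteq> 0"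
  shows "wnl_in (pm NY (pm Dinv (cst (\<psi> 0)))) UNIV (span_C der (Suc n) \<psi>)"
proof -
  define T where "T = pm Dinv (cst (\<psi> 0))"
  obtain E m p r where Er: "is_diffop E" "NY = (\<lambda>j. E j + pDinvq_sum m p r j)"
      "\<forall>i<m. r i \<in> span_C der n (\<lambda>i. der (\<psi> (Suc i) / \<psi> 0))"
    using NY unfolding wnl_in_def by blast
  have inS0: "\<psi> 0 \<in> span_C der (Suc n) \<psi>" by (rule span_elem) simp
  have "pm NY T = (\<lambda>j. pm E T j + (\<Sum>i<m. pm (pDinvq (p i) (r i)) T j))"
    unfolding Er(2) pDinvq_sum_def using Er(1)
    by (simp add: pm_add_left pm_sum_left diffop_pdo T_def)
  moreover have "wnl_in (pm E T) UNIV (span_C der (Suc n) \<psi>)"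
    unfolding T_def pm_Dinv_cst_right[OF Er(1)] using Er(1) inS0
    by (intro wnl_in_add wnl_in_diffop wnl_in_pDinvq) auto
  moreover have "wnl_in (pm (pDinvq (p i) (r i)) T) UNIV (span_C der (Suc n) \<psi>)" if i: "i < m" for i
  proof -
    obtain R where R: "R \<in> span_C der n (\<lambda>i. \<psi> (Suc i) / \<psi> 0)" "r i = der R"
      using span_der[of "r i" n "\<lambda>i. \<psi> (Suc i) / \<psi> 0"] Er(3) i by auto
    have "R * \<psi> 0 \<in> span_C der (Suc n) \<psi>" by (rule span_shift[OF R(1) p0])
    thus ?thesis unfolding R(2) T_def pm_pDinvq_der_Dinv using inS0
      by (intro wnl_in_diff wnl_in_pDinvq) (auto simp: mult.commute)
  qed
  ultimately show ?thesis unfolding T_def by (auto intro!: wnl_in_add wnl_in_sum)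
qed

lemma left_inverse_wnl:
  "is_diffop B \<Longrightarrow> B \<noteq> (\<lambda>_. 0) \<Longrightarrow> dord B = n \<Longrightarrow> lin_indep_C der n \<psi> \<Longrightarrow>
    (\<forall>i<n. ldiv_rem (pm (cst (\<psi> i)) B) = 0) \<Longrightarrow> \<exists>N. wnl_in N UNIV (span_C der n \<psi>) \<and> pm N B = cst 1"
proof (induction n arbitrary: B \<psi>)
  case 0
  obtain c where c: "B = cst c" "c \<noteq> 0" using dord_0_eq_cst 0 by blast
  have "pm (cst (inverse c)) B = cst 1" unfolding c(1) using c(2) by (simp add: pm_cst_cst)
  thus ?case using wnl_in_diffop[OF diffop_cst] by blast
next
  case (Suc n)
  note B = Suc.prems(1,2)
  have p0: "\<psi> 0 \<noteq> 0" using lin_indep_C_nonzero[OF Suc.prems(4)] by simp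
  obtain Y where Y: "is_diffop Y" "pm (cst (\<psi> 0)) B = pm Dop Y"
    using ldiv_rem_eq_0_iff[of "pm (cst (\<psi> 0)) B"] B Suc.prems(5) by auto
  have Ynz: "Y \<noteq> (\<lambda>_. 0)" using pm_nonzero[of "cst (\<psi> 0)" B] B p0 Y(2) by (auto simp: diffop_pdo cst_nz)
  have "Suc n = 1 + dord Y"
    using dord_pm(1)[OF diffop_cst cst_nz[OF p0] B] dord_pm(1)[OF diffop_Dop Dop_nz Y(1) Ynz] Y(2) Suc.prems(3)
    by (simp add: dord_cst[OF p0] dord_Dop)
  moreover have "\<forall>i<n. ldiv_rem (pm (cst (der (\<psi> (Suc i) / \<psi> 0))) Y) = 0"
    using ldiv_rem_der_ratio[OF B(1) Y p0] Suc.prems(5) by simp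
  moreover have "lin_indep_C der n (\<lambda>i. der (\<psi> (Suc i) / \<psi> 0))"
    using lin_indep_C_der_ratio[OF Suc.prems(4) p0] .
  ultimately obtain NY where NY: "wnl_in NY UNIV (span_C der n (\<lambda>i. der (\<psi> (Suc i) / \<psi> 0)))"
      "pm NY Y = cst 1"
    using Suc.IH[OF Y(1) Ynz] by auto
  have "pm (pm NY (pm Dinv (cst (\<psi> 0)))) B = pm NY (pm Dinv (pm Dop Y))"
    using wnl_in_pdo[OF NY(1)] B Y(2) by (simp add: pm_assoc diffop_pdo)
  hence "pm (pm NY (pm Dinv (cst (\<psi> 0)))) B = cst 1"
    using Y NY(2) by (simp add: pm_Dinv_Dop_cancel diffop_pdo)
  thus ?case using wnl_in_pm_Dinv_cst[OF NY(1) p0] by blast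
qed

lemma pm_D_minus_cst:
  assumes "u * f = der f"
  shows "pm (D_minus u) (cst f) = pm (cst f) Dop"
proof -
  have "pm (D_minus u) (cst f) = (\<lambda>j. pm Dop (cst f) j - pm (cst u) (cst f) j)"
    unfolding D_minus_def by (rule pm_diff_left) auto
  also have "pm (cst u) (cst f) = cst (der f)" using assms by (simp add: pm_cst_cst)
  also have "(\<lambda>j. pm Dop (cst f) j - cst (der f) j) = pm (cst f) Dop"
    unfolding pm_Dop_cst by simp
  finally show ?thesis .
qed

lemma wnl_in_cst_Dinv_cst_inverse:
  assumes NY: "wnl_in NY (span_C der n (\<lambda>i. \<phi> 0 * der (\<phi> (Suc i) / \<phi> 0))) UNIV" and p0: "\<phi> 0 \<noteq> 0"
  shows "wnl_in (pm (cst (\<phi> 0)) (pm Dinv (pm (cst (inverse (\<phi> 0))) NY))) (span_C der (Suc n) \<phi>) UNIV"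
proof -
  obtain E m p r where Er: "is_diffop E" "NY = (\<lambda>j. E j + pDinvq_sum m p r j)"
      "\<forall>i<m. p i \<in> span_C der n (\<lambda>i. \<phi> 0 * der (\<phi> (Suc i) / \<phi> 0))"
    using NY unfolding wnl_in_def by blast
  define V where "V = span_C der (Suc n) \<phi>"
  have inS0: "\<phi> 0 \<in> V" unfolding V_def by (rule span_elem) simp
  have "pm (cst (\<phi> 0)) (pm Dinv (pm (cst (inverse (\<phi> 0))) NY))
      = (\<lambda>j. pm (cst (\<phi> 0)) (pm Dinv (pm (cst (inverse (\<phi> 0))) E)) j
          + (\<Sum>i<m. pm (cst (\<phi> 0)) (pm Dinv (pDinvq (inverse (\<phi> 0) * p i) (r i))) j))"
    unfolding Er(2) pDinvq_sum_def using Er(1)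
    by (simp add: pm_add_right pm_sum_right pm_cst_pDinvq diffop_pdo)
  moreover have "wnl_in (pm (cst (\<phi> 0)) (pm Dinv (pm (cst (inverse (\<phi> 0))) E))) V UNIV"
    unfolding pm_cst_Dinv_diffop[OF Er(1)] using inS0 Er(1) ldiv_quot_rem(1)[of "pm (cst (inverse (\<phi> 0))) E"]
    by (intro wnl_in_add wnl_in_diffop wnl_in_pDinvq) auto
  moreover have "wnl_in (pm (cst (\<phi> 0)) (pm Dinv (pDinvq (inverse (\<phi> 0) * p i) (r i)))) V UNIV"
    if i: "i < m" for i
  proof -
    have "inverse (\<phi> 0) * p i \<in> span_C der n (\<lambda>j. der (\<phi> (Suc j) / \<phi> 0))"
      by (rule span_divide) (use Er(3) i p0 in auto)
    then obtain R where R: "R \<in> span_C der n (\<lambda>j. \<phi> (Suc j) / \<phi> 0)" "inverse (\<phi> 0) * p i = der R"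
      using span_der[of _ n "\<lambda>j. \<phi> (Suc j) / \<phi> 0"] by auto
    have "R * \<phi> 0 \<in> V" unfolding V_def by (rule span_shift[OF R(1) p0])
    thus ?thesis unfolding R(2) pm_cst_Dinv_pDinvq_der using inS0
      by (intro wnl_in_diff wnl_in_pDinvq) (auto simp: mult.commute V_def span_C_uminus)
  qed
  ultimately show ?thesis unfolding V_def by (auto intro!: wnl_in_add wnl_in_sum)
qed

lemma right_inverse_wnl:
  "is_diffop B \<Longrightarrow> B \<noteq> (\<lambda>_. 0) \<Longrightarrow> dord B = n \<Longrightarrow> lin_indep_C der n \<phi> \<Longrightarrow>
    (\<forall>i<n. apply_op der B (\<phi> i) = 0) \<Longrightarrow> \<exists>N. wnl_in N (span_C der n \<phi>) UNIV \<and> pm B N = cst 1"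
proof (induction n arbitrary: B \<phi>)
  case 0
  obtain c where c: "B = cst c" "c \<noteq> 0" using dord_0_eq_cst 0 by blast
  have "pm B (cst (inverse c)) = cst 1" unfolding c(1) using c(2) by (simp add: pm_cst_cst)
  thus ?case using wnl_in_diffop[OF diffop_cst] by blast
next
  case (Suc n)
  note B = Suc.prems(1,2)
  define u where "u = der (\<phi> 0) / \<phi> 0"
  have p0: "\<phi> 0 \<noteq> 0" using lin_indep_C_nonzero[OF Suc.prems(4)] by simp
  obtain Y where Y: "is_diffop Y" "Y \<noteq> (\<lambda>_. 0)" "B = pm Y (D_minus u)" "dord B = Suc (dord Y)"
    using diffop_right_factor_D_minus[OF B p0] Suc.prems(5) unfolding u_def by auto
  have "apply_op der B (\<phi> (Suc i)) = apply_op der Y (\<phi> 0 * der (\<phi> (Suc i) / \<phi> 0))" for i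
    using Y(1,3) p0 by (simp add: apply_op_pm apply_D_minus_log_der u_def)
  hence "\<forall>i<n. apply_op der Y (\<phi> 0 * der (\<phi> (Suc i) / \<phi> 0)) = 0" using Suc.prems(5) by auto
  moreover have "lin_indep_C der n (\<lambda>i. \<phi> 0 * der (\<phi> (Suc i) / \<phi> 0))"
    using lin_indep_C_mult[OF lin_indep_C_der_ratio[OF Suc.prems(4) p0] p0] .
  ultimately obtain NY where NY: "wnl_in NY (span_C der n (\<lambda>i. \<phi> 0 * der (\<phi> (Suc i) / \<phi> 0))) UNIV"
      "pm Y NY = cst 1"
    using Suc.IH[OF Y(1,2)] Y(4) Suc.prems(3) by auto
  define W where "W = pm (cst (inverse (\<phi> 0))) NY"
  have W: "is_pdo W" using wnl_in_pdo[OF NY(1)] by (simp add: W_def)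
  have "u * \<phi> 0 = der (\<phi> 0)" using p0 by (simp add: u_def)
  hence "pm (D_minus u) (pm (cst (\<phi> 0)) (pm Dinv W)) = pm (pm (cst (\<phi> 0)) Dop) (pm Dinv W)"
    using W by (simp add: pm_assoc[symmetric] diffop_pdo pm_D_minus_cst)
  also have "\<dots> = pm (cst (\<phi> 0)) W" using W by (simp add: pm_assoc pm_Dop_Dinv_cancel)
  also have "\<dots> = NY" using wnl_in_pdo[OF NY(1)] p0 by (simp add: W_def pm_cst_left mult.assoc[symmetric])
  finally have "pm B (pm (cst (\<phi> 0)) (pm Dinv W)) = cst 1"
    using Y(1,3) W NY(2) by (simp add: pm_assoc diffop_pdo)
  thus ?case using wnl_in_cst_Dinv_cst_inverse[OF NY(1) p0] unfolding W_def by blast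
qed

lemma pm_diffop_pDinvq_sum:
  assumes A: "is_diffop A"
  shows "\<exists>D. is_diffop D \<and> pm A (pDinvq_sum m p q) = (\<lambda>j. D j + pDinvq_sum m (\<lambda>i. apply_op der A (p i)) q j)"
proof -
  define D where "D = (\<lambda>j. \<Sum>i<m. pm (rquot_D (pm A (cst (p i)))) (cst (q i)) j)"
  have Dd: "is_diffop D" unfolding D_def using A by (intro diffop_sum) simp
  have "pm A (pDinvq_sum m p q) = (\<lambda>j. \<Sum>i<m. pm A (pDinvq (p i) (q i)) j)"
    unfolding pDinvq_sum_def by (rule pm_sum_right) (use A in \<open>auto simp: diffop_pdo\<close>)
  also have "\<dots> = (\<lambda>j. D j + pDinvq_sum m (\<lambda>i. apply_op der A (p i)) q j)"
    by (simp add: pm_pDinvq_right[OF A] D_def pDinvq_sum_def sum.distrib)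
  finally show ?thesis using Dd by blast
qed

lemma wnl_in_pm_diffop:
  assumes A: "is_diffop A" and N: "wnl_in N Vp Vq"
  shows "wnl_in (pm A N) UNIV UNIV"
proof -
  obtain E m p q where E: "is_diffop E" "N = (\<lambda>j. E j + pDinvq_sum m p q j)"
    using N unfolding wnl_in_def by blast
  obtain D where D: "is_diffop D" "pm A (pDinvq_sum m p q) = (\<lambda>j. D j + pDinvq_sum m (\<lambda>i. apply_op der A (p i)) q j)"
    using pm_diffop_pDinvq_sum[OF A] by blast
  have "pm A N = (\<lambda>j. pm A E j + pm A (pDinvq_sum m p q) j)"
    unfolding E(2) by (rule pm_add_right) (use A E in \<open>auto simp: diffop_pdo\<close>)
  also have "\<dots> = (\<lambda>j. (\<lambda>j. pm A E j + D j) j + pDinvq_sum m (\<lambda>i. apply_op der A (p i)) q j)"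
    by (simp add: D(2) add.assoc)
  finally show ?thesis unfolding wnl_in_def
    by (intro exI[of _ "\<lambda>j. pm A E j + D j"] exI[of _ m] exI[of _ "\<lambda>i. apply_op der A (p i)"] exI[of _ q])
      (use A E D in auto)
qed

lemma right_inverse_kernel:
  assumes B: "is_diffop B" and E: "is_diffop E" and Lq: "lin_indep_C der m q"
    and BN: "pm B (\<lambda>j. E j + pDinvq_sum m p q j) = cst 1"
  shows "\<forall>i<m. apply_op der B (p i) = 0"
proof -
  obtain D where D: "is_diffop D" "pm B (pDinvq_sum m p q) = (\<lambda>j. D j + pDinvq_sum m (\<lambda>i. apply_op der B (p i)) q j)"
    using pm_diffop_pDinvq_sum[OF B] by blast
  have "pm B (\<lambda>j. E j + pDinvq_sum m p q j) = (\<lambda>j. pm B E j + pm B (pDinvq_sum m p q) j)"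
    by (rule pm_add_right) (use B E in \<open>auto simp: diffop_pdo\<close>)
  hence eq: "cst 1 = (\<lambda>j. (pm B E j + D j) + pDinvq_sum m (\<lambda>i. apply_op der B (p i)) q j)"
    using BN D(2) by (simp add: add.assoc)
  have "\<forall>j<0. pDinvq_sum m (\<lambda>i. apply_op der B (p i)) q j = 0"
  proof (intro allI impI)
    fix j :: int assume j: "j < 0"
    have "cst 1 j = 0" using j by (simp add: cst_def)
    moreover have "pm B E j = 0" using diffop_neg[OF diffop_pm[OF B E] j] .
    moreover have "D j = 0" using diffop_neg[OF D(1) j] .
    ultimately show "pDinvq_sum m (\<lambda>i. apply_op der B (p i)) q j = 0" using fun_cong[OF eq, of j] by simp
  qed
  hence S: "(\<Sum>i<m. apply_op der B (p i) * dk k (q i)) = 0" for k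
    using pDinvq_sum_neg[of m "\<lambda>i. apply_op der B (p i)" q k] by auto
  show ?thesis using indep_all_derivs_imp_zero[OF Lq, of "\<lambda>i. apply_op der B (p i)"] S by blast
qed

lemma left_inverse_iff_right_inverse:
  assumes N: "is_pdo N" and B: "is_diffop B" "B \<noteq> (\<lambda>_. 0)"
  shows "pm N B = cst 1 \<longleftrightarrow> pm B N = cst 1"
proof
  assume NB: "pm N B = cst 1"
  have "pm (pm B N) B = pm B (cst 1)" using N B NB by (simp add: pm_assoc diffop_pdo)
  hence "pm (\<lambda>j. pm B N j - cst 1 j) B = (\<lambda>_. 0)"
    using N B by (subst pm_diff_left) (auto simp: diffop_pdo)
  hence "(\<lambda>j. pm B N j - cst 1 j) = (\<lambda>_. 0)"
    using pm_nonzero[of "\<lambda>j. pm B N j - cst 1 j" B] N B by (auto simp: diffop_pdo)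
  thus "pm B N = cst 1" by (simp add: fun_eq_iff)
next
  assume BN: "pm B N = cst 1"
  have "pm B (pm N B) = pm (cst 1) B" using N B BN by (simp add: pm_assoc[symmetric] diffop_pdo)
  hence "pm B (\<lambda>j. pm N B j - cst 1 j) = (\<lambda>_. 0)"
    using N B by (subst pm_diff_right) (auto simp: diffop_pdo)
  hence "(\<lambda>j. pm N B j - cst 1 j) = (\<lambda>_. 0)"
    using pm_nonzero[of B "\<lambda>j. pm N B j - cst 1 j"] N B by (auto simp: diffop_pdo)
  thus "pm N B = cst 1" by (simp add: fun_eq_iff)
qed

lemma minimal_rfd_inverse:
  assumes N: "is_pdo N" and B: "is_diffop B" "B \<noteq> (\<lambda>_. 0)" and NB: "pm N B = cst 1" and BN: "pm B N = cst 1"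
  shows "minimal_rfd der N (cst 1) B"
  unfolding minimal_rfd_def
proof (intro conjI allI impI)
  show "right_frac der N (cst 1) B" using B NB by (simp add: right_frac_def nonzero_op_iff)
  fix A' B' assume RF: "right_frac der N A' B'"
  have A': "is_diffop A'" "is_diffop B'" "pm N B' = A'" using RF by (auto simp: right_frac_def)
  have "B' = pm (pm B N) B'" using A' by (simp add: BN diffop_pdo)
  also have "\<dots> = pm B A'" using N B A' by (simp add: pm_assoc diffop_pdo)
  finally show "\<exists>D. is_diffop D \<and> A' = pm (cst 1) D \<and> B' = pm B D"
    using A' by (intro exI[of _ A']) (simp add: diffop_pdo)
qed


section \<open>Full kernels and weak non-locality\<close>

lemma full_kernels_of_wnl_inverse:
  assumes B: "is_diffop B" "B \<noteq> (\<lambda>_. 0)" and N: "wnl_in N Vp Vq"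
    and NB: "pm N B = cst 1" and BN: "pm B N = cst 1"
  shows "full_kernel der B \<and> full_kernel der (adjoint der B)"
proof -
  obtain E m p q where R: "is_diffop E" "N = wnl_form der E m p q" "lin_indep_C der m p" "lin_indep_C der m q"
    using wnl_in_indep_form[OF N] by blast
  have "minimal_rfd der N (cst 1) B" by (rule minimal_rfd_inverse[OF wnl_in_pdo[OF N] B NB BN])
  hence M: "dord B = m" "kernel der (adjoint der B) = span_C der m q"
    using minimal_rfd_indep_wnl_form R by blast+
  have "\<forall>i<m. apply_op der B (p i) = 0"
    by (rule right_inverse_kernel[OF B(1) R(1) R(4)]) (use BN R(2) in \<open>simp add: wnl_form_eq\<close>)
  hence "full_kernel der B" using full_kernel_intro[OF B] R(3) M(1) by simp
  moreover have "full_kernel der (adjoint der B)" unfolding full_kernel_def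
    using M R(4) dord_adj[OF B] by (intro exI[of _ q]) simp
  ultimately show ?thesis by blast
qed

lemma weakly_nonlocal_imp_full_kernel_adjoint:
  assumes MR: "minimal_rfd der L A B" and W: "weakly_nonlocal der L"
  shows "full_kernel der (adjoint der B)"
proof -
  have B: "is_diffop B" "B \<noteq> (\<lambda>_. 0)"
    using MR unfolding minimal_rfd_def right_frac_def nonzero_op_iff by blast+
  obtain E n p q where "is_diffop E" "L = wnl_form der E n p q" using W unfolding weakly_nonlocal_def by blast
  hence "wnl_in L UNIV UNIV" unfolding wnl_in_def wnl_form_eq by blast
  then obtain E' m p' q' where R: "is_diffop E'" "L = wnl_form der E' m p' q'"
      "lin_indep_C der m p'" "lin_indep_C der m q'"
    using wnl_in_indep_form by blast
  have "dord B = m" "kernel der (adjoint der B) = span_C der m q'"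
    using minimal_rfd_indep_wnl_form[OF MR R] by blast+
  thus ?thesis unfolding full_kernel_def using R(4) dord_adj[OF B] by (intro exI[of _ q']) simp
qed

lemma full_kernel_adjoint_imp_weakly_nonlocal:
  assumes L: "is_pdo L" and MR: "minimal_rfd der L A B" and F: "full_kernel der (adjoint der B)"
  shows "weakly_nonlocal der L \<and> full_kernel der B"
proof -
  have B: "is_diffop B" "B \<noteq> (\<lambda>_. 0)" and LB: "pm L B = A" and A: "is_diffop A"
    using MR unfolding minimal_rfd_def right_frac_def nonzero_op_iff by blast+
  obtain \<psi> where \<psi>: "lin_indep_C der (dord B) \<psi>" "span_C der (dord B) \<psi> = kernel der (adjoint der B)"
    using F dord_adj[OF B] unfolding full_kernel_def by auto
  have "\<forall>i<dord B. ldiv_rem (pm (cst (\<psi> i)) B) = 0"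
    using span_elem[of _ "dord B" \<psi>] \<psi>(2) kernel_adjoint_iff[OF B(1)] by blast
  then obtain N where N: "wnl_in N UNIV (span_C der (dord B) \<psi>)" "pm N B = cst 1"
    using left_inverse_wnl[OF B refl \<psi>(1)] by blast
  have BN: "pm B N = cst 1" using left_inverse_iff_right_inverse[OF wnl_in_pdo[OF N(1)] B] N(2) by blast
  have "L = pm (pm L B) N" using L B wnl_in_pdo[OF N(1)] BN by (simp add: pm_assoc diffop_pdo)
  hence "wnl_in L UNIV UNIV" using wnl_in_pm_diffop[OF A N(1)] LB by simp
  hence "weakly_nonlocal der L" unfolding weakly_nonlocal_def using wnl_in_imp_wnl_form by blast
  thus ?thesis using full_kernels_of_wnl_inverse[OF B N BN] by blast
qed

lemma full_kernel_imp_full_kernel_adjoint: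
  assumes B: "is_diffop B" "B \<noteq> (\<lambda>_. 0)" and F: "full_kernel der B"
  shows "full_kernel der (adjoint der B)"
proof -
  obtain \<phi> where \<phi>: "lin_indep_C der (dord B) \<phi>" "span_C der (dord B) \<phi> = kernel der B"
    using F unfolding full_kernel_def by auto
  have "\<forall>i<dord B. apply_op der B (\<phi> i) = 0"
    using span_elem[of _ "dord B" \<phi>] \<phi>(2) by (auto simp: kernel_def)
  then obtain N where N: "wnl_in N (span_C der (dord B) \<phi>) UNIV" "pm B N = cst 1"
    using right_inverse_wnl[OF B refl \<phi>(1)] by blast
  have "pm N B = cst 1" using left_inverse_iff_right_inverse[OF wnl_in_pdo[OF N(1)] B] N(2) by blast
  thus ?thesis using full_kernels_of_wnl_inverse[OF B N(1) _ N(2)] by blast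
qed

end

theorem lemma4p5:
  fixes der :: "'a::field_char_0 \<Rightarrow> 'a" and L A B :: "'a pdo"
  assumes "diff_field der"
    and "is_pdo L"
    and "minimal_rfd der L A B"
  shows "(weakly_nonlocal der L \<longleftrightarrow> full_kernel der B)
       \<and> (full_kernel der B \<longleftrightarrow> full_kernel der (adjoint der B))
       \<and> (\<forall>E n p q. is_diffop E \<and> L = wnl_form der E n p q
              \<and> lin_indep_C der n p \<and> lin_indep_C der n q \<longrightarrow>
            dord B = n
            \<and> is_right_lcm der B n (\<lambda>i. inv_coeff_D (q i))
            \<and> kernel der (adjoint der B) = span_C der n q)"
proof -
  interpret derivation der by (rule diff_field_derivation[OF assms(1)])
  have B: "is_diffop B" "B \<noteq> (\<lambda>_. 0)"
    using assms(3) unfolding minimal_rfd_def right_frac_def nonzero_op_iff by blast+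
  have "weakly_nonlocal der L \<Longrightarrow> full_kernel der (adjoint der B)"
    by (rule weakly_nonlocal_imp_full_kernel_adjoint[OF assms(3)])
  moreover have "full_kernel der (adjoint der B) \<Longrightarrow> weakly_nonlocal der L \<and> full_kernel der B"
    by (rule full_kernel_adjoint_imp_weakly_nonlocal[OF assms(2,3)])
  moreover have "full_kernel der B \<Longrightarrow> full_kernel der (adjoint der B)"
    by (rule full_kernel_imp_full_kernel_adjoint[OF B])
  ultimately show ?thesis using minimal_rfd_indep_wnl_form[OF assms(3)] by blast
qed

end
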